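(* If $x$ and $y$ are Schur-finite elements of a $\lambda$-ring $R$, then $x+y$ is Schur-finite.
   Context: $\lambda$-rings are special $\lambda$-rings. For $x\in R$ and a partition $\pi$, $s_\pi(x)=u_x(s_\pi)$, where $s_\pi$ is the Schur function in the ring of symmetric functions $\Lambda=\mathbb{Z}[e_1,e_2,\dots]$ and $u_x:\Lambda\to R$ is the unique $\lambda$-ring homomorphism with $u_x(e_1)=x$ (here $\lambda^n(e_1)=e_n$). A partition $\pi$ contains $\lambda$ if its Young diagram contains that of $\lambda$. An element $x$ is Schur-finite if there is a partition $\lambda$ (a bound) such that $s_\pi(x)=0$ for every partition $\pi$ containing $\lambda$. *)

theory Defs
  imports Main "Jordan_Normal_Form.Determinant"
begin

definition is_partition :: "nat list \<Rightarrow> bool" where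
  "is_partition p \<longleftrightarrow> sorted_wrt (\<ge>) p \<and> 0 \<notin> set p"

definition part_contains :: "nat list \<Rightarrow> nat list \<Rightarrow> bool" where
  "part_contains q la \<longleftrightarrow>
     length la \<le> length q \<and> (\<forall>i < length la. la ! i \<le> q ! i)"

definition conj_part :: "nat list \<Rightarrow> nat list" where
  "conj_part p = map (\<lambda>j. length (filter (\<lambda>r. j < r) p))
                     [0..<(if p = [] then 0 else hd p)]"

definition lam_int :: "(nat \<Rightarrow> 'a::comm_ring_1 \<Rightarrow> 'a) \<Rightarrow> int \<Rightarrow> 'a \<Rightarrow> 'a" where
  "lam_int lam k x = (if k < 0 then 0 else lam (nat k) x)"

text \<open>s_pi(x) = u_x(s_pi), where u_x(e_n) = lambda^n(x). We use the dual
  Jacobi--Trudi expression s_pi = det (e_{q'_i - i + j}) of the Schur function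
  in terms of the elementary symmetric functions, q' the conjugate partition.\<close>
definition schur :: "(nat \<Rightarrow> 'a::comm_ring_1 \<Rightarrow> 'a) \<Rightarrow> nat list \<Rightarrow> 'a \<Rightarrow> 'a" where
  "schur lam p x =
     (let c = conj_part p; m = length c in
      det (mat m m (\<lambda>(i, j). lam_int lam (int (c ! i) - int i + int j) x)))"

text \<open>lambda-ring axioms: lambda^0 = 1, lambda^1 = id, additivity, lambda^n(1) = 0 for n >= 2,
  and the product axiom lambda^n(xy) = P_n(lambda^1 x,...,lambda^1 y,...), where the universal
  polynomial P_n is written via the dual Cauchy identity as sum over partitions q of n of
  s_pi(x) s_pi'(y).  (The composition axiom for lambda^m o lambda^n is not included.)\<close>
definition lambda_ring :: "(nat \<Rightarrow> 'a::comm_ring_1 \<Rightarrow> 'a) \<Rightarrow> bool" where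
  "lambda_ring lam \<longleftrightarrow>
     (\<forall>x. lam 0 x = 1) \<and>
     (\<forall>x. lam 1 x = x) \<and>
     (\<forall>n x y. lam n (x + y) = (\<Sum>i\<le>n. lam i x * lam (n - i) y)) \<and>
     (\<forall>n\<ge>2. lam n 1 = 0) \<and>
     (\<forall>n x y. lam n (x * y) =
        (\<Sum>p\<in>{p. is_partition p \<and> sum_list p = n}. schur lam p x * schur lam (conj_part p) y))"

definition schur_finite :: "(nat \<Rightarrow> 'a::comm_ring_1 \<Rightarrow> 'a) \<Rightarrow> 'a \<Rightarrow> bool" where
  "schur_finite lam x \<longleftrightarrow>
     (\<exists>la. is_partition la \<and>
        (\<forall>q. is_partition q \<and> part_contains q la \<longrightarrow> schur lam q x = 0))"

end

theory Submission
  imports Defs "HOL-Combinatorics.Permutations" "HOL-Library.FuncSet"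
begin

text \<open>Write \<open>e\<^sub>m = \<lambda>\<^sup>m(z)\<close>, with \<open>e\<^sub>m = 0\<close> for \<open>m < 0\<close>. By the dual Jacobi--Trudi formula,
  the values \<open>s\<^sub>\<pi>(z)\<close> are the minors of the Toeplitz matrix \<open>(e\<^bsub>i-j\<^esub>)\<close> whose columns are
  the first ones, so \<open>z\<close> is Schur-finite iff these straight minors vanish once the shape contains
  a fixed \<open>a \<times> b\<close> box. A Laplace expansion of a larger straight minor, with an induction on the
  position of the columns, upgrades this to the vanishing of all \<open>a \<times> a\<close> minors whose rows run
  far enough ahead of their columns; a second Laplace expansion extends it to larger minors, and
  transposing and reversing the Toeplitz matrix gives the mirrored condition. Additivity of the
  \<open>\<lambda>\<close>-operations makes the Toeplitz matrix of \<open>x + y\<close> the product of those of \<open>x\<close> and \<open>y\<close>, so by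
  Cauchy--Binet every minor for \<open>x + y\<close> is a sum of products of a minor for \<open>x\<close> and one for \<open>y\<close>;
  when the shape contains the two boxes stacked, one factor of each product vanishes.\<close>

definition set_nth :: "nat set \<Rightarrow> nat \<Rightarrow> nat" where
  "set_nth S i = sorted_list_of_set S ! i"

definition set_index :: "nat set \<Rightarrow> nat \<Rightarrow> nat" where
  "set_index S v = inv_into {..<card S} (set_nth S) v"

lemma set_nth_bij: "finite S \<Longrightarrow> bij_betw (set_nth S) {..<card S} S"
  unfolding set_nth_def
  by (rule bij_betw_nth) (auto simp: sorted_list_of_set.length_sorted_key_list_of_set)

lemma set_nth_in: "finite S \<Longrightarrow> i < card S \<Longrightarrow> set_nth S i \<in> S"
  using set_nth_bij bij_betwE by blast

lemma set_nth_strict_mono: "finite S \<Longrightarrow> i < j \<Longrightarrow> j < card S \<Longrightarrow> set_nth S i < set_nth S j"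
  unfolding set_nth_def
  using sorted_list_of_set.strict_sorted_key_list_of_set[of S]
  by (simp add: sorted_wrt_nth_less)

lemma set_nth_mono: "finite S \<Longrightarrow> i \<le> j \<Longrightarrow> j < card S \<Longrightarrow> set_nth S i \<le> set_nth S j"
  using set_nth_strict_mono[of S i j] by (cases "i = j") auto

lemma set_index_bij: "finite S \<Longrightarrow> bij_betw (set_index S) S {..<card S}"
  unfolding set_index_def using set_nth_bij bij_betw_inv_into by blast

lemma set_index_set_nth[simp]: "finite S \<Longrightarrow> i < card S \<Longrightarrow> set_index S (set_nth S i) = i"
  unfolding set_index_def using set_nth_bij bij_betw_inv_into_left by fastforce

lemma set_nth_set_index[simp]: "finite S \<Longrightarrow> v \<in> S \<Longrightarrow> set_nth S (set_index S v) = v"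
  unfolding set_index_def using set_nth_bij bij_betw_inv_into_right by fastforce

lemma set_nth_image_strict_mono:
  assumes "\<And>i j. i < j \<Longrightarrow> j < m \<Longrightarrow> f i < f j" "i < m"
  shows "set_nth (f ` {..<m}) i = f i"
proof -
  have "sorted_wrt (<) (map f [0..<m])"
    using assms(1) by (auto simp: sorted_wrt_iff_nth_less)
  then have "sorted_list_of_set (set (map f [0..<m])) = map f [0..<m]"
    by (intro sorted_list_of_set.idem_if_sorted_distinct) (auto simp: strict_sorted_iff)
  moreover have "set (map f [0..<m]) = f ` {..<m}" by auto
  ultimately show ?thesis using assms(2) unfolding set_nth_def by simp
qed

lemma sum_set_nth: "finite X \<Longrightarrow> (\<Sum>i<card X. set_nth X i) = \<Sum> X"
  using sum.reindex_bij_betw[OF set_nth_bij, of X "\<lambda>x. x"] by simp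

lemma set_nth_eq_imp_eq:
  assumes "finite X" "finite Y" "card X = card Y" "\<And>i. i < card X \<Longrightarrow> set_nth X i = set_nth Y i"
  shows "X = Y"
proof -
  have "X = set_nth X ` {..<card X}" using set_nth_bij[OF assms(1)] by (simp add: bij_betw_def)
  also have "\<dots> = set_nth Y ` {..<card Y}" using assms(3,4) by (auto simp: image_iff)
  also have "\<dots> = Y" using set_nth_bij[OF assms(2)] by (simp add: bij_betw_def)
  finally show ?thesis .
qed

lemma card_lessThan_Diff: "S \<subseteq> {..<n} \<Longrightarrow> card ({..<n} - S) = n - card S"
  by (simp add: card_Diff_subset finite_subset)

lemma bij_betw_plus_lessThan:
  assumes "p \<le> (n::nat)" shows "bij_betw ((+) p) {..<n - p} {p..<n}"
proof (rule bij_betw_imageI)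
  have "(+) p ` {0..<n - p} = {p..<n}" using assms by simp
  then show "(+) p ` {..<n - p} = {p..<n}" by (simp add: atLeast0LessThan)
qed (simp add: inj_on_def)

lemma bij_betw_minus_atLeastLessThan: "p \<le> (n::nat) \<Longrightarrow> bij_betw (\<lambda>i. i - p) {p..<n} {..<n - p}"
  by (rule bij_betw_imageI) (auto simp: inj_on_def image_iff intro!: bexI[of _ "_ + p"])

lemma permutes_lessThan_less: "q permutes {..<n} \<Longrightarrow> i < n \<Longrightarrow> q i < n"
  using permutes_in_image[of q "{..<n}" i] by simp

definition det_fun :: "nat \<Rightarrow> (nat \<Rightarrow> nat \<Rightarrow> 'a::comm_ring_1) \<Rightarrow> 'a" where
  "det_fun n f = (\<Sum>q\<in>{q. q permutes {..<n}}. of_int (sign q) * (\<Prod>i<n. f i (q i)))"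

lemma sign_mult_eq_0D: "(of_int (sign q) :: 'a::comm_ring_1) * x = 0 \<Longrightarrow> x = 0"
  by (cases "sign q = 1") (auto simp: sign_def split: if_splits)

lemma det_mat_eq_det_fun: "det (mat n n (\<lambda>(i,j). f i j)) = det_fun n f"
proof -
  have "det (mat n n (\<lambda>(i,j). f i j)) = (\<Sum>p\<in>{p. p permutes {0..<n}}.
     of_int (sign p) * (\<Prod>i=0..<n. mat n n (\<lambda>(i,j). f i j) $$ (i, p i)))"
    by (rule det_def') auto
  also have "\<dots> = det_fun n f" unfolding det_fun_def atLeast0LessThan
    by (intro sum.cong refl arg_cong2[where f="(*)"] prod.cong)
       (auto simp: permutes_lessThan_less)
  finally show ?thesis .
qed

lemma det_fun_cong: "(\<And>i j. i < n \<Longrightarrow> j < n \<Longrightarrow> f i j = g i j) \<Longrightarrow> det_fun n f = det_fun n g"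
  unfolding det_fun_def
  by (intro sum.cong refl arg_cong2[where f="(*)"] prod.cong) (auto simp: permutes_lessThan_less)

lemma det_fun_identical_rows:
  assumes "i < n" "i' < n" "i \<noteq> i'" "\<And>j. j < n \<Longrightarrow> g i j = g i' j"
  shows "det_fun n g = 0"
proof -
  have "det (mat n n (\<lambda>(i,j). g i j)) = 0"
    by (rule det_identical_rows[OF _ assms(3,1,2)]) (auto simp: assms(1,2,4) row_mat)
  then show ?thesis by (simp add: det_mat_eq_det_fun)
qed

lemma det_fun_permute_rows:
  assumes "t permutes {..<n}"
  shows "det_fun n (\<lambda>i j. g (t i) j) = of_int (sign t) * det_fun n g"
proof -
  have tp: "t permutes {0..<n}" using assms by (simp add: atLeast0LessThan)
  have "det (mat n n (\<lambda>(i,j). mat n n (\<lambda>(i,j). g i j) $$ (t i, j))) =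
      of_int (sign t) * det (mat n n (\<lambda>(i,j). g i j))"
    by (rule det_permute_rows[OF _ tp]) auto
  moreover have "mat n n (\<lambda>(i,j). mat n n (\<lambda>(i,j). g i j) $$ (t i, j)) = mat n n (\<lambda>(i,j). g (t i) j)"
    by (rule eq_matI) (auto simp: permutes_lessThan_less[OF assms])
  ultimately show ?thesis by (simp add: det_mat_eq_det_fun)
qed

lemma det_fun_transpose: "det_fun n (\<lambda>i j. g j i) = det_fun n g"
proof -
  have "det (transpose_mat (mat n n (\<lambda>(i,j). g i j))) = det (mat n n (\<lambda>(i,j). g i j))"
    by (rule det_transpose) auto
  moreover have "transpose_mat (mat n n (\<lambda>(i,j). g i j)) = mat n n (\<lambda>(i,j). g j i)"
    by (rule eq_matI) auto
  ultimately show ?thesis by (simp add: det_mat_eq_det_fun)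
qed

lemma det_fun_permute_cols:
  assumes "t permutes {..<n}"
  shows "det_fun n (\<lambda>i j. g i (t j)) = of_int (sign t) * det_fun n g"
proof -
  have "det_fun n (\<lambda>i j. g i (t j)) = det_fun n (\<lambda>i j. g j (t i))" by (rule det_fun_transpose[symmetric])
  also have "\<dots> = of_int (sign t) * det_fun n (\<lambda>i j. g j i)"
    by (rule det_fun_permute_rows[OF assms, of "\<lambda>i j. g j i"])
  also have "det_fun n (\<lambda>i j. g j i) = det_fun n g" by (rule det_fun_transpose)
  finally show ?thesis .
qed

definition rev_perm :: "nat \<Rightarrow> nat \<Rightarrow> nat" where
  "rev_perm n i = (if i < n then n - 1 - i else i)"

lemma rev_perm_permutes: "rev_perm n permutes {..<n}"
proof (rule bij_imp_permutes)
  show "bij_betw (rev_perm n) {..<n} {..<n}"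
  proof (rule bij_betw_imageI)
    show "inj_on (rev_perm n) {..<n}" by (rule inj_onI) (auto simp: rev_perm_def)
    show "rev_perm n ` {..<n} = {..<n}"
    proof
      show "rev_perm n ` {..<n} \<subseteq> {..<n}" by (auto simp: rev_perm_def)
      show "{..<n} \<subseteq> rev_perm n ` {..<n}"
      proof
        fix x assume "x \<in> {..<n}"
        then show "x \<in> rev_perm n ` {..<n}" by (intro image_eqI[where x="n - 1 - x"]) (auto simp: rev_perm_def)
      qed
    qed
  qed
qed (simp add: rev_perm_def)

lemma det_fun_reverse: "det_fun n (\<lambda>i j. g (n - 1 - i) (n - 1 - j)) = det_fun n g"
proof -
  have "det_fun n (\<lambda>i j. g (n - 1 - i) (n - 1 - j)) = det_fun n (\<lambda>i j. g (rev_perm n i) (rev_perm n j))"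
    by (rule det_fun_cong) (simp add: rev_perm_def)
  also have "\<dots> = of_int (sign (rev_perm n)) * det_fun n (\<lambda>i j. g i (rev_perm n j))"
    by (rule det_fun_permute_rows[OF rev_perm_permutes, where g="\<lambda>i j. g i (rev_perm n j)"])
  also have "det_fun n (\<lambda>i j. g i (rev_perm n j)) = of_int (sign (rev_perm n)) * det_fun n g"
    by (rule det_fun_permute_cols[OF rev_perm_permutes])
  finally show ?thesis by (simp add: mult.assoc[symmetric] of_int_mult[symmetric])
qed

lemma det_fun_zero_block:
  assumes i0: "i0 < n" and z: "\<And>i j. i0 \<le> i \<Longrightarrow> i < n \<Longrightarrow> j \<le> i0 \<Longrightarrow> f i j = 0"
  shows "det_fun n f = 0"
  unfolding det_fun_def
proof (rule sum.neutral, intro ballI)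
  fix q assume "q \<in> {q. q permutes {..<n}}"
  then have q: "q permutes {..<n}" by simp
  have "\<exists>i\<in>{i0..<n}. q i \<le> i0"
  proof (rule ccontr)
    assume "\<not> ?thesis"
    then have "q ` {i0..<n} \<subseteq> {Suc i0..<n}" using permutes_lessThan_less[OF q] by auto
    moreover have "inj_on q {i0..<n}" using permutes_inj[OF q] by (auto intro: inj_on_subset[of q UNIV])
    ultimately have "card {i0..<n} \<le> card {Suc i0..<n}"
      by (intro card_inj_on_le) auto
    then show False using i0 by simp
  qed
  then obtain i where i: "i0 \<le> i" "i < n" "q i \<le> i0" by auto
  then have "(\<Prod>i<n. f i (q i)) = 0"
    by (intro prod_zero) (auto intro!: bexI[of _ i] z)
  then show "of_int (sign q) * (\<Prod>i<n. f i (q i)) = 0" by simp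
qed

lemma det_fun_unit_upper_triangular:
  assumes "\<And>i j. j < i \<Longrightarrow> i < n \<Longrightarrow> f i j = 0" "\<And>i. i < n \<Longrightarrow> f i i = 1"
  shows "det_fun n f = 1"
proof -
  have "det (mat n n (\<lambda>(i,j). f i j)) = prod_list (diag_mat (mat n n (\<lambda>(i,j). f i j)))"
    by (rule det_upper_triangular) (auto simp: upper_triangular_def assms(1))
  also have "\<dots> = 1" unfolding prod_list_diag_prod by (auto simp: assms(2) intro: prod.neutral)
  finally show ?thesis by (simp add: det_mat_eq_det_fun)
qed

lemma det_fun_drop_last:
  assumes z: "\<And>j. j < m \<Longrightarrow> f m j = 0" and o: "f m m = 1"
  shows "det_fun (Suc m) f = det_fun m f"
proof -
  let ?A = "mat (Suc m) (Suc m) (\<lambda>(i,j). f i j)"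
  have A: "?A \<in> carrier_mat (Suc m) (Suc m)" by simp
  have "det ?A = (\<Sum>j<Suc m. ?A $$ (m,j) * cofactor ?A m j)"
    by (rule laplace_expansion_row[OF A]) simp
  also have "\<dots> = ?A $$ (m,m) * cofactor ?A m m + (\<Sum>j<m. ?A $$ (m,j) * cofactor ?A m j)"
    by simp
  also have "(\<Sum>j<m. ?A $$ (m,j) * cofactor ?A m j) = 0"
    by (rule sum.neutral) (auto simp: z)
  also have "?A $$ (m,m) * cofactor ?A m m = det (mat_delete ?A m m)"
    by (simp add: o cofactor_def)
  also have "mat_delete ?A m m = mat m m (\<lambda>(i,j). f i j)"
    by (rule eq_matI) (auto simp: mat_delete_def)
  finally show ?thesis by (simp add: det_mat_eq_det_fun)
qed

section \<open>Laplace expansion along the first rows\<close>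

definition merge_perm :: "nat \<Rightarrow> nat \<Rightarrow> nat set \<Rightarrow> nat \<Rightarrow> nat" where
  "merge_perm n p S i = (if i < p then set_nth S i else if i < n then set_nth ({..<n} - S) (i - p) else i)"

definition shift_perm :: "nat \<Rightarrow> nat \<Rightarrow> (nat \<Rightarrow> nat) \<Rightarrow> nat \<Rightarrow> nat" where
  "shift_perm n p t i = (if i \<in> {p..<n} then p + t (i - p) else i)"

lemma shift_perm_permutes_sign:
  assumes "t permutes {..<n-p}" "p \<le> n"
  shows "shift_perm n p t permutes {..<n}" "sign (shift_perm n p t) = sign t"
proof -
  have pb: "permutes_bij_finite t {..<n-p} {p..<n} ((+) p) (\<lambda>i. i - p)"
    unfolding permutes_bij_finite_def permutes_bij_def permutes_bij_finite_axioms_def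
    using assms bij_betw_plus_lessThan[OF assms(2)] by auto
  have e: "shift_perm n p t = (\<lambda>x. if x \<in> {p..<n} then p + t (x - p) else x)"
    by (simp add: shift_perm_def fun_eq_iff)
  show "sign (shift_perm n p t) = sign t" unfolding e
    using permutes_bij_finite.sign_p'[OF pb] by simp
  have "(\<lambda>x. if x \<in> {p..<n} then p + t (x - p) else x) permutes {p..<n}"
    using permutes_bij.permutes_p'[OF pb[unfolded permutes_bij_finite_def, THEN conjunct1]] by simp
  then show "shift_perm n p t permutes {..<n}" unfolding e
    by (rule permutes_subset) auto
qed

definition split_perm :: "nat \<Rightarrow> nat \<Rightarrow> nat set \<Rightarrow> (nat \<Rightarrow> nat) \<Rightarrow> (nat \<Rightarrow> nat) \<Rightarrow> nat \<Rightarrow> nat" where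
  "split_perm n p S t1 t2 i = (if i < p then set_nth S (t1 i) else if i < n then set_nth ({..<n} - S) (t2 (i - p)) else i)"

lemma merge_perm_permutes:
  assumes S: "S \<subseteq> {..<n}" "card S = p"
  shows "merge_perm n p S permutes {..<n}"
proof (rule bij_imp_permutes)
  have fS: "finite S" using S finite_subset by blast
  have pn: "p \<le> n" using S card_mono[of "{..<n}" S] by auto
  have "bij_betw (merge_perm n p S) {..<p} S \<longleftrightarrow> bij_betw (set_nth S) {..<p} S"
    by (rule bij_betw_cong) (simp add: merge_perm_def)
  then have b1: "bij_betw (merge_perm n p S) {..<p} S" using set_nth_bij[OF fS] S(2) by simp
  have b2: "bij_betw (set_nth ({..<n} - S) \<circ> (\<lambda>i. i - p)) {p..<n} ({..<n} - S)"
    by (rule bij_betw_trans[OF bij_betw_minus_atLeastLessThan[OF pn]])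
       (use set_nth_bij[of "{..<n} - S"] card_lessThan_Diff[OF S(1)] S(2) in auto)
  have "bij_betw (merge_perm n p S) {p..<n} ({..<n} - S) \<longleftrightarrow>
      bij_betw (set_nth ({..<n} - S) \<circ> (\<lambda>i. i - p)) {p..<n} ({..<n} - S)"
    by (rule bij_betw_cong) (simp add: merge_perm_def)
  then have b2': "bij_betw (merge_perm n p S) {p..<n} ({..<n} - S)" using b2 by simp
  have "bij_betw (merge_perm n p S) ({..<p} \<union> {p..<n}) (S \<union> ({..<n} - S))"
    by (rule bij_betw_combine[OF b1 b2']) auto
  moreover have "{..<p} \<union> {p..<n} = {..<n}" using pn by auto
  moreover have "S \<union> ({..<n} - S) = {..<n}" using S by auto
  ultimately show "bij_betw (merge_perm n p S) {..<n} {..<n}" by simp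
  show "\<And>x. x \<notin> {..<n} \<Longrightarrow> merge_perm n p S x = x" using pn by (auto simp: merge_perm_def)
qed

lemma split_perm_eq:
  assumes "t1 permutes {..<p}" "t2 permutes {..<n-p}" "p \<le> n"
  shows "split_perm n p S t1 t2 = merge_perm n p S \<circ> t1 \<circ> shift_perm n p t2"
proof
  fix i
  show "split_perm n p S t1 t2 i = (merge_perm n p S \<circ> t1 \<circ> shift_perm n p t2) i"
  proof (cases "i < p")
    case True
    then show ?thesis using permutes_lessThan_less[OF assms(1) True]
      by (simp add: split_perm_def merge_perm_def shift_perm_def)
  next
    case False
    show ?thesis
    proof (cases "i < n")
      case True
      have "t2 (i - p) < n - p" using permutes_lessThan_less[OF assms(2)] True False by auto
      then have "t1 (p + t2 (i - p)) = p + t2 (i - p)"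
        using assms(1) by (intro permutes_not_in) auto
      moreover have "p + t2 (i - p) < n" using \<open>t2 (i - p) < n - p\<close> by simp
      ultimately show ?thesis using True False
        by (simp add: split_perm_def merge_perm_def shift_perm_def)
    next
      case F2: False
      then have "t1 i = i" using assms(1) False by (intro permutes_not_in) auto
      then show ?thesis using False F2 by (simp add: split_perm_def merge_perm_def shift_perm_def)
    qed
  qed
qed

lemma split_perm_permutes:
  assumes "t1 permutes {..<p}" "t2 permutes {..<n-p}" "S \<subseteq> {..<n}" "card S = p"
  shows "split_perm n p S t1 t2 permutes {..<n}"
proof -
  have pn: "p \<le> n" using assms card_mono[of "{..<n}" S] by auto
  show ?thesis unfolding split_perm_eq[OF assms(1,2) pn]
    by (intro permutes_compose shift_perm_permutes_sign(1)[OF assms(2) pn] merge_perm_permutes[OF assms(3,4)]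
        permutes_subset[OF assms(1)]) (use pn in auto)
qed

lemma sign_split_perm:
  assumes "t1 permutes {..<p}" "t2 permutes {..<n-p}" "S \<subseteq> {..<n}" "card S = p"
  shows "sign (split_perm n p S t1 t2) = sign (merge_perm n p S) * sign t1 * sign t2"
proof -
  have pn: "p \<le> n" using assms card_mono[of "{..<n}" S] by auto
  have pm: "permutation (merge_perm n p S)" "permutation t1" "permutation (shift_perm n p t2)"
    using merge_perm_permutes[OF assms(3,4)] assms(1) shift_perm_permutes_sign(1)[OF assms(2) pn]
    by (auto simp: permutation_permutes)
  show ?thesis unfolding split_perm_eq[OF assms(1,2) pn]
    using pm shift_perm_permutes_sign(2)[OF assms(2) pn]
    by (simp add: sign_compose permutation_compose)
qed

lemma prod_split_perm:
  assumes "p \<le> n"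
  shows "(\<Prod>i<n. f i (split_perm n p S t1 t2 i)) =
    (\<Prod>i<p. f i (set_nth S (t1 i))) * (\<Prod>i<n-p. f (p+i) (set_nth ({..<n} - S) (t2 i)))"
proof -
  have u: "{..<n} = {..<p} \<union> {p..<n}" using assms by auto
  have "(\<Prod>i<n. f i (split_perm n p S t1 t2 i)) =
     (\<Prod>i<p. f i (split_perm n p S t1 t2 i)) * (\<Prod>i\<in>{p..<n}. f i (split_perm n p S t1 t2 i))"
    unfolding u by (rule prod.union_disjoint) auto
  also have "(\<Prod>i<p. f i (split_perm n p S t1 t2 i)) = (\<Prod>i<p. f i (set_nth S (t1 i)))"
    by (rule prod.cong) (auto simp: split_perm_def)
  also have "(\<Prod>i\<in>{p..<n}. f i (split_perm n p S t1 t2 i)) = (\<Prod>i\<in>(+) p ` {..<n-p}. f i (split_perm n p S t1 t2 i))"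
    using bij_betw_plus_lessThan[OF assms] by (simp add: bij_betw_def)
  also have "\<dots> = (\<Prod>i<n-p. f (p+i) (split_perm n p S t1 t2 (p+i)))"
    by (subst prod.reindex) (auto simp: inj_on_def)
  also have "\<dots> = (\<Prod>i<n-p. f (p+i) (set_nth ({..<n} - S) (t2 i)))"
    by (rule prod.cong) (auto simp: split_perm_def)
  finally show ?thesis .
qed

lemma split_perm_image_lessThan:
  assumes "t1 permutes {..<p}" "finite S" "card S = p"
  shows "split_perm n p S t1 t2 ` {..<p} = S"
proof -
  have "split_perm n p S t1 t2 ` {..<p} = set_nth S ` (t1 ` {..<p})"
    by (auto simp: split_perm_def image_iff permutes_lessThan_less[OF assms(1)])
  also have "t1 ` {..<p} = {..<p}" by (rule permutes_image[OF assms(1)])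
  also have "set_nth S ` {..<p} = S" using set_nth_bij[OF assms(2)] assms(3) by (simp add: bij_betw_def)
  finally show ?thesis .
qed

lemma split_perm_inj:
  assumes "S \<subseteq> {..<n}" "card S = p"
  shows "inj_on (\<lambda>(t1, t2). split_perm n p S t1 t2)
           ({t. t permutes {..<p}} \<times> {t. t permutes {..<n - p}})"
proof (rule inj_onI, clarify)
  fix t1 t2 t1' t2'
  assume t: "t1 permutes {..<p}" "t2 permutes {..<n - p}" "t1' permutes {..<p}" "t2' permutes {..<n - p}"
    and eq: "split_perm n p S t1 t2 = split_perm n p S t1' t2'"
  have fS: "finite S" using assms(1) finite_subset by blast
  let ?C = "{..<n} - S"
  have cC: "card ?C = n - p" using card_lessThan_Diff[OF assms(1)] assms(2) by simp
  have inj_S: "inj_on (set_nth S) {..<p}" and inj_C: "inj_on (set_nth ?C) {..<n - p}"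
    using set_nth_bij[OF fS] set_nth_bij[of ?C] assms(2) cC by (auto simp: bij_betw_def)
  show "t1 = t1' \<and> t2 = t2'"
  proof (intro conjI ext)
    fix i
    show "t1 i = t1' i"
    proof (cases "i < p")
      case True
      then have "set_nth S (t1 i) = set_nth S (t1' i)"
        using fun_cong[OF eq, of i] by (simp add: split_perm_def)
      then show ?thesis
        using inj_onD[OF inj_S] permutes_lessThan_less[OF t(1) True] permutes_lessThan_less[OF t(3) True]
        by blast
    qed (simp add: permutes_not_in[OF t(1)] permutes_not_in[OF t(3)])
    show "t2 i = t2' i"
    proof (cases "i < n - p")
      case True
      then have "p + i < n" by linarith
      then have "set_nth ?C (t2 i) = set_nth ?C (t2' i)"
        using fun_cong[OF eq, of "p + i"] by (simp add: split_perm_def)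
      then show ?thesis
        using inj_onD[OF inj_C] permutes_lessThan_less[OF t(2) True] permutes_lessThan_less[OF t(4) True]
        by blast
    qed (simp add: permutes_not_in[OF t(2)] permutes_not_in[OF t(4)])
  qed
qed

lemma set_index_comp_permutes:
  assumes "bij_betw g {..<n} S" "finite S" "card S = n"
  shows "(\<lambda>i. if i < n then set_index S (g i) else i) permutes {..<n}"
proof (rule bij_imp_permutes)
  have "bij_betw (set_index S \<circ> g) {..<n} {..<n}"
    using assms set_index_bij[OF assms(2)] by (auto intro: bij_betw_trans)
  then show "bij_betw (\<lambda>i. if i < n then set_index S (g i) else i) {..<n} {..<n}"
    by (rule bij_betw_cong[THEN iffD1, rotated]) simp
qed simp

lemma permutes_eq_split_perm:
  assumes q: "q permutes {..<n}" and qS: "q ` {..<p} = S" and pn: "p \<le> n"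
  obtains t1 t2 where "t1 permutes {..<p}" "t2 permutes {..<n - p}" "q = split_perm n p S t1 t2"
proof -
  let ?C = "{..<n} - S"
  have Ssub: "S \<subseteq> {..<n}" using qS permutes_lessThan_less[OF q] pn by auto
  have fS: "finite S" and cS: "card S = p"
    using qS permutes_inj[OF q] by (auto simp: card_image inj_on_subset)
  have cC: "card ?C = n - p" using card_lessThan_Diff[OF Ssub] cS by simp
  have qC: "q ` {p..<n} = ?C"
  proof -
    have "q ` {..<n} = {..<n}" by (rule permutes_image[OF q])
    moreover have "{..<n} = {..<p} \<union> {p..<n}" using pn by auto
    moreover have "q ` {..<p} \<inter> q ` {p..<n} = {}"
      using permutes_inj[OF q] by (auto simp: inj_eq)
    ultimately show ?thesis using qS by auto
  qed
  have q_inj: "inj_on q A" for A using permutes_inj[OF q] by (rule inj_on_subset) simp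
  define t1 where "t1 i = (if i < p then set_index S (q i) else i)" for i
  define t2 where "t2 i = (if i < n - p then set_index ?C (q (p + i)) else i)" for i
  have "bij_betw q {..<p} S" using qS q_inj by (simp add: bij_betw_def)
  then have "t1 permutes {..<p}" unfolding t1_def using fS cS by (rule set_index_comp_permutes)
  moreover have "bij_betw q {p..<n} ?C" using qC q_inj by (simp add: bij_betw_def)
  then have "bij_betw (\<lambda>i. q (p + i)) {..<n - p} ?C"
    using bij_betw_trans[OF bij_betw_plus_lessThan[OF pn]] by (simp add: comp_def)
  then have "t2 permutes {..<n - p}" unfolding t2_def using _ cC by (rule set_index_comp_permutes) simp
  moreover have "q = split_perm n p S t1 t2"
  proof
    fix i
    consider "i < p" | "p \<le> i" "i < n" | "n \<le> i" by linarith
    then show "q i = split_perm n p S t1 t2 i"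
    proof cases
      case 1
      then show ?thesis using qS fS by (auto simp: split_perm_def t1_def)
    next
      case 2
      then have "q i \<in> ?C" unfolding qC[symmetric] by simp
      moreover have "i - p < n - p" "p + (i - p) = i" using 2 by auto
      ultimately show ?thesis using 2 by (simp add: split_perm_def t2_def)
    next
      case 3
      then show ?thesis using permutes_not_in[OF q, of i] pn by (simp add: split_perm_def)
    qed
  qed
  ultimately show thesis by (rule that)
qed

lemma split_perm_image:
  assumes "S \<subseteq> {..<n}" "card S = p"
  shows "(\<lambda>(t1, t2). split_perm n p S t1 t2) ` ({t. t permutes {..<p}} \<times> {t. t permutes {..<n - p}})
           = {q. q permutes {..<n} \<and> q ` {..<p} = S}" (is "?f ` ?T = ?Q")
proof (intro equalityI subsetI)
  have pn: "p \<le> n" using assms card_mono[of "{..<n}" S] by auto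
  fix q assume "q \<in> ?Q"
  then have "q permutes {..<n}" "q ` {..<p} = S" by auto
  then obtain t1 t2 where t: "t1 permutes {..<p}" "t2 permutes {..<n - p}" and q: "q = split_perm n p S t1 t2"
    using permutes_eq_split_perm[OF _ _ pn] by metis
  have "?f (t1, t2) \<in> ?f ` ?T" using t by (intro imageI) simp
  then show "q \<in> ?f ` ?T" by (simp add: q)
next
  have fS: "finite S" using assms(1) finite_subset by blast
  fix q assume "q \<in> ?f ` ?T"
  then obtain t1 t2 where t: "t1 permutes {..<p}" "t2 permutes {..<n - p}" and q: "q = split_perm n p S t1 t2"
    by auto
  show "q \<in> ?Q"
    unfolding q using split_perm_permutes[OF t assms] split_perm_image_lessThan[OF t(1) fS assms(2)] by simp
qed

lemma sum_permutes_image_eq: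
  fixes f :: "nat \<Rightarrow> nat \<Rightarrow> 'a::comm_ring_1"
  assumes S: "S \<subseteq> {..<n}" "card S = p"
  shows "(\<Sum>q\<in>{q. q permutes {..<n} \<and> q ` {..<p} = S}. of_int (sign q) * (\<Prod>i<n. f i (q i)))
    = of_int (sign (merge_perm n p S)) * det_fun p (\<lambda>i j. f i (set_nth S j))
        * det_fun (n - p) (\<lambda>i j. f (p + i) (set_nth ({..<n} - S) j))"
proof -
  let ?P = "\<lambda>m. {t. t permutes {..<m::nat}}"
  let ?C = "{..<n} - S"
  have pn: "p \<le> n" using S card_mono[of "{..<n}" S] by auto
  have "(\<Sum>q\<in>{q. q permutes {..<n} \<and> q ` {..<p} = S}. of_int (sign q) * (\<Prod>i<n. f i (q i)))
      = (\<Sum>(t1, t2)\<in>?P p \<times> ?P (n - p). of_int (sign (split_perm n p S t1 t2))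
            * (\<Prod>i<n. f i (split_perm n p S t1 t2 i)))"
    unfolding split_perm_image[OF S, symmetric]
    by (subst sum.reindex[OF split_perm_inj[OF S]]) (simp add: case_prod_beta)
  also have "\<dots> = (\<Sum>(t1, t2)\<in>?P p \<times> ?P (n - p). of_int (sign (merge_perm n p S)) *
        ((of_int (sign t1) * (\<Prod>i<p. f i (set_nth S (t1 i)))) *
         (of_int (sign t2) * (\<Prod>i<n - p. f (p + i) (set_nth ?C (t2 i))))))"
  proof (intro sum.cong refl, clarify)
    fix t1 t2 assume t: "t1 permutes {..<p}" "t2 permutes {..<n - p}"
    show "of_int (sign (split_perm n p S t1 t2)) * (\<Prod>i<n. f i (split_perm n p S t1 t2 i)) =
        of_int (sign (merge_perm n p S)) *
        ((of_int (sign t1) * (\<Prod>i<p. f i (set_nth S (t1 i)))) *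
         (of_int (sign t2) * (\<Prod>i<n - p. f (p + i) (set_nth ?C (t2 i)))))"
      unfolding sign_split_perm[OF t S] prod_split_perm[OF pn] by (simp add: ac_simps)
  qed
  also have "\<dots> = of_int (sign (merge_perm n p S)) * (\<Sum>t1\<in>?P p. \<Sum>t2\<in>?P (n - p).
        (of_int (sign t1) * (\<Prod>i<p. f i (set_nth S (t1 i)))) *
        (of_int (sign t2) * (\<Prod>i<n - p. f (p + i) (set_nth ?C (t2 i)))))"
    by (simp add: sum.cartesian_product split_def sum_distrib_left)
  also have "\<dots> = of_int (sign (merge_perm n p S)) * det_fun p (\<lambda>i j. f i (set_nth S j))
        * det_fun (n - p) (\<lambda>i j. f (p + i) (set_nth ?C j))"
    unfolding det_fun_def by (simp only: sum_product mult.assoc)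
  finally show ?thesis .
qed

lemma det_fun_laplace:
  fixes f :: "nat \<Rightarrow> nat \<Rightarrow> 'a::comm_ring_1"
  assumes "p \<le> n"
  shows "det_fun n f = (\<Sum>S\<in>{S. S \<subseteq> {..<n} \<and> card S = p}. of_int (sign (merge_perm n p S)) *
      det_fun p (\<lambda>i j. f i (set_nth S j)) * det_fun (n - p) (\<lambda>i j. f (p + i) (set_nth ({..<n} - S) j)))"
proof -
  have "det_fun n f = (\<Sum>S\<in>{S. S \<subseteq> {..<n} \<and> card S = p}.
      \<Sum>q\<in>{q. q \<in> {q. q permutes {..<n}} \<and> q ` {..<p} = S}. of_int (sign q) * (\<Prod>i<n. f i (q i)))"
    unfolding det_fun_def
  proof (rule sum.group[symmetric])
    show "finite {S. S \<subseteq> {..<n} \<and> card S = p}" by (rule finite_subset[of _ "Pow {..<n}"]) auto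
    show "(\<lambda>q. q ` {..<p}) ` {q. q permutes {..<n}} \<subseteq> {S. S \<subseteq> {..<n} \<and> card S = p}"
    proof clarsimp
      fix q assume q: "q permutes {..<n}"
      show "q ` {..<p} \<subseteq> {..<n} \<and> card (q ` {..<p}) = p"
        using permutes_lessThan_less[OF q] permutes_inj[OF q] assms
        by (auto simp: card_image inj_on_subset)
    qed
  qed (simp add: finite_permutations)
  then show ?thesis by (simp add: sum_permutes_image_eq)
qed

section \<open>The Cauchy--Binet formula\<close>

lemma bij_betw_restrict_set_nth_permutes:
  assumes S: "S \<subseteq> {..<N}" "card S = n"
  shows "bij_betw (\<lambda>t. restrict (set_nth S \<circ> t) {..<n}) {t. t permutes {..<n}}
           {\<phi> \<in> PiE {..<n} (\<lambda>_. {..<N}). inj_on \<phi> {..<n} \<and> \<phi> ` {..<n} = S}"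
proof (rule bij_betw_byWitness[where f'="\<lambda>\<phi> i. if i < n then set_index S (\<phi> i) else i"])
  have fS: "finite S" using S(1) finite_subset by blast
  have inS: "bij_betw (set_nth S) {..<n} S" using set_nth_bij[OF fS] S(2) by simp
  show "\<forall>t\<in>{t. t permutes {..<n}}.
      (\<lambda>i. if i < n then set_index S (restrict (set_nth S \<circ> t) {..<n} i) else i) = t"
    using fS S(2) by (auto simp: fun_eq_iff permutes_lessThan_less permutes_not_in)
  show "\<forall>\<phi>\<in>{\<phi> \<in> PiE {..<n} (\<lambda>_. {..<N}). inj_on \<phi> {..<n} \<and> \<phi> ` {..<n} = S}.
      restrict (set_nth S \<circ> (\<lambda>i. if i < n then set_index S (\<phi> i) else i)) {..<n} = \<phi>"
    using fS by (auto simp: fun_eq_iff PiE_def extensional_def)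
  show "(\<lambda>t. restrict (set_nth S \<circ> t) {..<n}) ` {t. t permutes {..<n}}
      \<subseteq> {\<phi> \<in> PiE {..<n} (\<lambda>_. {..<N}). inj_on \<phi> {..<n} \<and> \<phi> ` {..<n} = S}"
  proof clarify
    fix t assume t: "t permutes {..<n}"
    have "bij_betw (set_nth S \<circ> t) {..<n} S"
      using permutes_imp_bij[OF t] inS by (rule bij_betw_trans)
    then have "bij_betw (restrict (set_nth S \<circ> t) {..<n}) {..<n} S"
      by (rule bij_betw_cong[THEN iffD1, rotated]) simp
    then show "restrict (set_nth S \<circ> t) {..<n} \<in> PiE {..<n} (\<lambda>_. {..<N}) \<and>
        inj_on (restrict (set_nth S \<circ> t) {..<n}) {..<n} \<and> restrict (set_nth S \<circ> t) {..<n} ` {..<n} = S"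
      using S(1) by (auto simp: bij_betw_def)
  qed
  show "(\<lambda>\<phi> i. if i < n then set_index S (\<phi> i) else i) `
      {\<phi> \<in> PiE {..<n} (\<lambda>_. {..<N}). inj_on \<phi> {..<n} \<and> \<phi> ` {..<n} = S} \<subseteq> {t. t permutes {..<n}}"
  proof (rule image_subsetI)
    fix \<phi> assume "\<phi> \<in> {\<phi> \<in> PiE {..<n} (\<lambda>_. {..<N}). inj_on \<phi> {..<n} \<and> \<phi> ` {..<n} = S}"
    then have "bij_betw \<phi> {..<n} S" by (simp add: bij_betw_def)
    then have "(\<lambda>i. if i < n then set_index S (\<phi> i) else i) permutes {..<n}"
      using fS S(2) by (rule set_index_comp_permutes)
    then show "(\<lambda>i. if i < n then set_index S (\<phi> i) else i) \<in> {t. t permutes {..<n}}" by simp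
  qed
qed

lemma sum_inj_maps_onto_eq:
  fixes A B :: "nat \<Rightarrow> nat \<Rightarrow> 'a::comm_ring_1"
  assumes S: "S \<subseteq> {..<N}" "card S = n"
  shows "(\<Sum>\<phi>\<in>{\<phi> \<in> PiE {..<n} (\<lambda>_. {..<N}). inj_on \<phi> {..<n} \<and> \<phi> ` {..<n} = S}.
            (\<Prod>i<n. A i (\<phi> i)) * det_fun n (\<lambda>i j. B (\<phi> i) j))
    = det_fun n (\<lambda>i j. A i (set_nth S j)) * det_fun n (\<lambda>i j. B (set_nth S i) j)"
proof -
  let ?D = "det_fun n (\<lambda>i j. B (set_nth S i) j)"
  have "(\<Sum>\<phi>\<in>{\<phi> \<in> PiE {..<n} (\<lambda>_. {..<N}). inj_on \<phi> {..<n} \<and> \<phi> ` {..<n} = S}.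
            (\<Prod>i<n. A i (\<phi> i)) * det_fun n (\<lambda>i j. B (\<phi> i) j))
      = (\<Sum>t\<in>{t. t permutes {..<n}}. (\<Prod>i<n. A i (set_nth S (t i)))
            * det_fun n (\<lambda>i j. B (set_nth S (t i)) j))"
    unfolding sum.reindex_bij_betw[OF bij_betw_restrict_set_nth_permutes[OF S], symmetric]
    by (intro sum.cong refl arg_cong2[where f="(*)"] prod.cong det_fun_cong) simp_all
  also have "\<dots> = (\<Sum>t\<in>{t. t permutes {..<n}}. (of_int (sign t) * (\<Prod>i<n. A i (set_nth S (t i)))) * ?D)"
    by (intro sum.cong refl)
      (simp add: det_fun_permute_rows[where g="\<lambda>i j. B (set_nth S i) j"] mult_ac)
  also have "\<dots> = det_fun n (\<lambda>i j. A i (set_nth S j)) * ?D"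
    unfolding det_fun_def[of n "\<lambda>i j. A i (set_nth S j)"] by (simp add: sum_distrib_right)
  finally show ?thesis .
qed

lemma det_fun_cauchy_binet:
  fixes A B :: "nat \<Rightarrow> nat \<Rightarrow> 'a::comm_ring_1"
  shows "det_fun n (\<lambda>i j. \<Sum>k<N. A i k * B k j) =
    (\<Sum>S\<in>{S. S \<subseteq> {..<N} \<and> card S = n}. det_fun n (\<lambda>i j. A i (set_nth S j)) * det_fun n (\<lambda>i j. B (set_nth S i) j))"
proof -
  let ?Phi = "PiE {..<n} (\<lambda>_. {..<N})"
  let ?Sub = "{S. S \<subseteq> {..<N} \<and> card S = n}"
  let ?D = "\<lambda>\<phi>. det_fun n (\<lambda>i j. B (\<phi> i) j)"
  have finPhi: "finite ?Phi" by (simp add: finite_PiE)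
  have finSub: "finite ?Sub" by (rule finite_subset[of _ "Pow {..<N}"]) auto
  have "det_fun n (\<lambda>i j. \<Sum>k<N. A i k * B k j) =
      (\<Sum>q\<in>{q. q permutes {..<n}}. of_int (sign q) * (\<Sum>\<phi>\<in>?Phi. \<Prod>i<n. A i (\<phi> i) * B (\<phi> i) (q i)))"
    unfolding det_fun_def by (subst prod_sum_PiE) auto
  also have "\<dots> = (\<Sum>\<phi>\<in>?Phi. (\<Prod>i<n. A i (\<phi> i)) * ?D \<phi>)"
    unfolding det_fun_def sum_distrib_left
    by (subst sum.swap) (simp add: prod.distrib mult_ac)
  also have "\<dots> = (\<Sum>\<phi>\<in>{\<phi>\<in>?Phi. inj_on \<phi> {..<n}}. (\<Prod>i<n. A i (\<phi> i)) * ?D \<phi>)"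
  proof (rule sum.mono_neutral_right[OF finPhi])
    show "\<forall>\<phi>\<in>?Phi - {\<phi>\<in>?Phi. inj_on \<phi> {..<n}}. (\<Prod>i<n. A i (\<phi> i)) * ?D \<phi> = 0"
    proof
      fix \<phi> assume "\<phi> \<in> ?Phi - {\<phi>\<in>?Phi. inj_on \<phi> {..<n}}"
      then obtain i i' where "i < n" "i' < n" "i \<noteq> i'" "\<phi> i = \<phi> i'"
        by (auto simp: inj_on_def)
      then have "?D \<phi> = 0" by (intro det_fun_identical_rows[of i n i']) auto
      then show "(\<Prod>i<n. A i (\<phi> i)) * ?D \<phi> = 0" by simp
    qed
  qed auto
  also have "\<dots> = (\<Sum>S\<in>?Sub. \<Sum>\<phi>\<in>{\<phi>. \<phi> \<in> {\<phi>\<in>?Phi. inj_on \<phi> {..<n}} \<and> \<phi> ` {..<n} = S}.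
       (\<Prod>i<n. A i (\<phi> i)) * ?D \<phi>)"
  proof (rule sum.group[symmetric])
    show "finite {\<phi>\<in>?Phi. inj_on \<phi> {..<n}}" using finPhi by simp
    show "(\<lambda>\<phi>. \<phi> ` {..<n}) ` {\<phi>\<in>?Phi. inj_on \<phi> {..<n}} \<subseteq> ?Sub"
      by (auto simp: card_image PiE_def Pi_def)
  qed (rule finSub)
  also have "\<dots> = (\<Sum>S\<in>?Sub. det_fun n (\<lambda>i j. A i (set_nth S j)) * det_fun n (\<lambda>i j. B (set_nth S i) j))"
  proof (rule sum.cong[OF refl])
    fix S assume "S \<in> ?Sub"
    then have S: "S \<subseteq> {..<N}" "card S = n" by auto
    have "{\<phi>. \<phi> \<in> {\<phi>\<in>?Phi. inj_on \<phi> {..<n}} \<and> \<phi> ` {..<n} = S}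
        = {\<phi>\<in>?Phi. inj_on \<phi> {..<n} \<and> \<phi> ` {..<n} = S}" by blast
    then show "(\<Sum>\<phi>\<in>{\<phi>. \<phi> \<in> {\<phi>\<in>?Phi. inj_on \<phi> {..<n}} \<and> \<phi> ` {..<n} = S}.
        (\<Prod>i<n. A i (\<phi> i)) * ?D \<phi>)
      = det_fun n (\<lambda>i j. A i (set_nth S j)) * det_fun n (\<lambda>i j. B (set_nth S i) j)"
      using sum_inj_maps_onto_eq[OF S, of A B] by simp
  qed
  finally show ?thesis .
qed

section \<open>Minors of Toeplitz matrices\<close>

definition toeplitz_minor :: "(int \<Rightarrow> 'a::comm_ring_1) \<Rightarrow> nat \<Rightarrow> (nat \<Rightarrow> int) \<Rightarrow> (nat \<Rightarrow> int) \<Rightarrow> 'a" where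
  "toeplitz_minor e n r k = det_fun n (\<lambda>i j. e (r i - k j))"

definition strict_dec :: "nat \<Rightarrow> (nat \<Rightarrow> int) \<Rightarrow> bool" where
  "strict_dec n r \<longleftrightarrow> (\<forall>i j. i < j \<longrightarrow> j < n \<longrightarrow> r j < r i)"

lemma strict_dec_le: "strict_dec n r \<Longrightarrow> i \<le> j \<Longrightarrow> j < n \<Longrightarrow> r j \<le> r i"
  unfolding strict_dec_def by (cases "i = j") (auto intro: less_imp_le)

lemma strict_dec_mono: "strict_dec n r \<Longrightarrow> m \<le> n \<Longrightarrow> strict_dec m r"
  unfolding strict_dec_def by auto

lemma strict_dec_set_nth:
  assumes "strict_dec n k" "S \<subseteq> {..<n}" "card S = m"
  shows "strict_dec m (\<lambda>j. k (set_nth S j))"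
  unfolding strict_dec_def
proof (intro allI impI)
  fix i j assume ij: "i < j" "j < m"
  have fS: "finite S" using assms(2) finite_subset by blast
  have "set_nth S i < set_nth S j" using set_nth_strict_mono[OF fS ij(1)] ij assms(3) by simp
  moreover have "set_nth S j < n" using set_nth_in[OF fS, of j] ij assms by auto
  ultimately show "k (set_nth S j) < k (set_nth S i)" using assms(1) unfolding strict_dec_def by blast
qed

lemma strict_dec_add_index:
  assumes "strict_dec n r" "i \<le> j" "j < n"
  shows "r j + int j \<le> r i + int i"
  using assms(2,3)
proof (induction j rule: dec_induct)
  case base then show ?case by simp
next
  case (step j)
  have "r (Suc j) < r j" using assms(1) step unfolding strict_dec_def by simp
  then show ?case using step by simp
qed

definition normalized :: "(int \<Rightarrow> 'a::comm_ring_1) \<Rightarrow> bool" where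
  "normalized e \<longleftrightarrow> e 0 = 1 \<and> (\<forall>m<0. e m = 0)"

text \<open>For strictly decreasing \<open>r\<close> and \<open>k\<close>, \<open>toeplitz_minor e n r k\<close> with \<open>e\<^sub>m = \<lambda>\<^sup>m(z)\<close> is the
  skew Schur value \<open>s\<^bsub>\<alpha>/\<beta>\<^esub>(z)\<close> with conjugate shapes \<open>\<alpha>'\<^sub>i = r\<^sub>i + i\<close>, \<open>\<beta>'\<^sub>j = k\<^sub>j + j\<close>
  (dual Jacobi--Trudi); \<open>k\<^sub>j = -j\<close> gives straight shapes. The predicates below say that such
  minors vanish once \<open>\<alpha>'/\<beta>'\<close> contains \<open>a\<close> rows of length \<open>b\<close>: in rows \<open>0..a-1\<close> past \<open>\<beta>'\<^sub>0\<close>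
  (\<open>vanishes_top\<close>, its \<open>n = a\<close> case \<open>vanishes_square\<close>, its \<open>\<beta> = 0\<close> case
  \<open>vanishes_straight\<close>), or in rows \<open>n-a..n-1\<close> past \<open>\<beta>'\<^bsub>n-a\<^esub>\<close> (\<open>vanishes_bottom\<close>).\<close>

definition vanishes_square :: "nat \<Rightarrow> nat \<Rightarrow> (int \<Rightarrow> 'a::comm_ring_1) \<Rightarrow> bool" where
  "vanishes_square a b e \<longleftrightarrow> (\<forall>r k. strict_dec a r \<longrightarrow> strict_dec a k \<longrightarrow> int b \<le> r (a-1) - k 0 + int a - 1 \<longrightarrow> toeplitz_minor e a r k = 0)"

definition vanishes_top :: "nat \<Rightarrow> nat \<Rightarrow> (int \<Rightarrow> 'a::comm_ring_1) \<Rightarrow> bool" where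
  "vanishes_top a b e \<longleftrightarrow> (\<forall>n r k. strict_dec n r \<longrightarrow> strict_dec n k \<longrightarrow> a \<le> n \<longrightarrow>
      int b \<le> r (a-1) - k 0 + int a - 1 \<longrightarrow> toeplitz_minor e n r k = 0)"

definition vanishes_bottom :: "nat \<Rightarrow> nat \<Rightarrow> (int \<Rightarrow> 'a::comm_ring_1) \<Rightarrow> bool" where
  "vanishes_bottom a b e \<longleftrightarrow> (\<forall>n r k. strict_dec n r \<longrightarrow> strict_dec n k \<longrightarrow> a \<le> n \<longrightarrow>
      int b \<le> r (n-1) - k (n-a) + int a - 1 \<longrightarrow> toeplitz_minor e n r k = 0)"

definition vanishes_straight :: "nat \<Rightarrow> nat \<Rightarrow> (int \<Rightarrow> 'a::comm_ring_1) \<Rightarrow> bool" where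
  "vanishes_straight a b e \<longleftrightarrow> (\<forall>n r. strict_dec n r \<longrightarrow> a \<le> n \<longrightarrow>
      int b \<le> r (a-1) + int a - 1 \<longrightarrow> toeplitz_minor e n r (\<lambda>j. - int j) = 0)"

lemma vanishes_top_imp_straight: "vanishes_top a b e \<Longrightarrow> vanishes_straight a b e"
  unfolding vanishes_top_def vanishes_straight_def
proof (intro allI impI)
  fix n r assume T: "\<forall>n r k. strict_dec n r \<longrightarrow> strict_dec n k \<longrightarrow> a \<le> n \<longrightarrow>
      int b \<le> r (a-1) - k 0 + int a - 1 \<longrightarrow> toeplitz_minor e n r k = 0"
    and "strict_dec n r" "a \<le> n" "int b \<le> r (a-1) + int a - 1"
  moreover have "strict_dec n (\<lambda>j. - int j)" by (simp add: strict_dec_def)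
  ultimately show "toeplitz_minor e n r (\<lambda>j. - int j) = 0" by auto
qed

lemma vanishes_straight_mono: "vanishes_straight a b e \<Longrightarrow> b \<le> b' \<Longrightarrow> vanishes_straight a b' e"
  unfolding vanishes_straight_def by fastforce

lemma vanishes_top_imp_bottom: assumes "vanishes_top a b e" "1 \<le> a" shows "vanishes_bottom a b e"
  unfolding vanishes_bottom_def
proof (intro allI impI)
  fix n r k assume r: "strict_dec n r" and k: "strict_dec n k" and an: "a \<le> n"
    and c: "int b \<le> r (n-1) - k (n-a) + int a - 1"
  define r' where "r' i = - k (n - 1 - i)" for i
  define k' where "k' j = - r (n - 1 - j)" for j
  have "strict_dec n r'" using k unfolding strict_dec_def r'_def by auto
  moreover have "strict_dec n k'" using r unfolding strict_dec_def k'_def by auto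
  moreover have "int b \<le> r' (a-1) - k' 0 + int a - 1"
  proof -
    have "n - 1 - (a - 1) = n - a" "n - 1 - 0 = n - 1" using an assms(2) by auto
    then show ?thesis using c unfolding r'_def k'_def by simp
  qed
  ultimately have "toeplitz_minor e n r' k' = 0" using assms(1) an unfolding vanishes_top_def by blast
  moreover have "toeplitz_minor e n r' k' = toeplitz_minor e n r k"
  proof -
    have "toeplitz_minor e n r' k' = det_fun n (\<lambda>i j. e (r (n - 1 - j) - k (n - 1 - i)))"
      unfolding toeplitz_minor_def r'_def k'_def by (simp add: algebra_simps)
    also have "\<dots> = det_fun n (\<lambda>i j. e (r (n - 1 - i) - k (n - 1 - j)))"
      by (rule det_fun_transpose)
    also have "\<dots> = toeplitz_minor e n r k" unfolding toeplitz_minor_def by (rule det_fun_reverse)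
    finally show ?thesis .
  qed
  ultimately show "toeplitz_minor e n r k = 0" by simp
qed

lemma vanishes_square_imp_top: assumes F: "vanishes_square a b e" and a1: "1 \<le> a" shows "vanishes_top a b e"
  unfolding vanishes_top_def
proof (intro allI impI)
  fix n r k assume r: "strict_dec n r" and k: "strict_dec n k" and an: "a \<le> n"
    and c: "int b \<le> r (a-1) - k 0 + int a - 1"
  have "toeplitz_minor e n r k = (\<Sum>S\<in>{S. S \<subseteq> {..<n} \<and> card S = a}. of_int (sign (merge_perm n a S)) *
      det_fun a (\<lambda>i j. e (r i - k (set_nth S j))) * det_fun (n-a) (\<lambda>i j. e (r (a+i) - k (set_nth ({..<n} - S) j))))"
    unfolding toeplitz_minor_def by (rule det_fun_laplace[OF an])
  also have "\<dots> = 0"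
  proof (rule sum.neutral, intro ballI)
    fix S assume S: "S \<in> {S. S \<subseteq> {..<n} \<and> card S = a}"
    then have Ss: "S \<subseteq> {..<n}" and cS: "card S = a" by auto
    have fS: "finite S" using Ss finite_subset by blast
    have "set_nth S 0 < n" using set_nth_in[OF fS, of 0] cS a1 Ss by auto
    then have "k (set_nth S 0) \<le> k 0" using strict_dec_le[OF k, of 0 "set_nth S 0"] by simp
    then have c': "int b \<le> r (a-1) - k (set_nth S 0) + int a - 1" using c by simp
    have "toeplitz_minor e a r (\<lambda>j. k (set_nth S j)) = 0"
      using F strict_dec_mono[OF r an] strict_dec_set_nth[OF k Ss cS] c' unfolding vanishes_square_def by auto
    then show "of_int (sign (merge_perm n a S)) *
      det_fun a (\<lambda>i j. e (r i - k (set_nth S j))) * det_fun (n-a) (\<lambda>i j. e (r (a+i) - k (set_nth ({..<n} - S) j))) = 0"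
      unfolding toeplitz_minor_def by simp
  qed
  finally show "toeplitz_minor e n r k = 0" .
qed

section \<open>From straight to square minors\<close>

lemma toeplitz_minor_shift: "toeplitz_minor e n (\<lambda>i. r i - c) (\<lambda>j. k j - c) = toeplitz_minor e n r k"
  unfolding toeplitz_minor_def by simp

lemma set_nth_le_if_det_fun_ne_0:
  assumes e: "\<And>m. m < 0 \<Longrightarrow> e m = 0" and J: "finite J" "card J = m" and C: "finite C" "card C = m"
    and ne: "det_fun m (\<lambda>i j. e (int (set_nth C j) - int (set_nth J i))) \<noteq> 0" and i: "i < m"
  shows "set_nth J i \<le> set_nth C i"
proof (rule ccontr)
  assume "\<not> ?thesis"
  then have lt: "set_nth C i < set_nth J i" by simp
  have "det_fun m (\<lambda>i j. e (int (set_nth C j) - int (set_nth J i))) = 0"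
  proof (rule det_fun_zero_block[OF i])
    fix i' j assume i': "i \<le> i'" "i' < m" and j: "j \<le> i"
    have "set_nth C j \<le> set_nth C i" using set_nth_mono[OF C(1) j] i C(2) by simp
    moreover have "set_nth J i \<le> set_nth J i'" using set_nth_mono[OF J(1) i'(1)] i' J(2) by simp
    ultimately show "e (int (set_nth C j) - int (set_nth J i')) = 0" using lt e by simp
  qed
  with ne show False by simp
qed

lemma det_fun_set_nth_diff_self:
  assumes "normalized e" "finite J" "card J = m"
  shows "det_fun m (\<lambda>i j. e (int (set_nth J j) - int (set_nth J i))) = 1"
  by (rule det_fun_unit_upper_triangular)
    (use assms set_nth_strict_mono[OF assms(2)] in \<open>auto simp: normalized_def\<close>)

lemma sum_less_if_complement_dominated:
  fixes L :: nat
  assumes P: "P \<subseteq> {..<L}" and S: "S \<subseteq> {..<L}" "card S = card P" "S \<noteq> P"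
    and le: "\<And>i. i < L - card P \<Longrightarrow> set_nth ({..<L} - P) i \<le> set_nth ({..<L} - S) i"
  shows "\<Sum> S < \<Sum> P"
proof (rule ccontr)
  let ?J = "{..<L} - P" and ?C = "{..<L} - S"
  have cJ: "card ?J = L - card P" and cC: "card ?C = L - card P"
    using card_lessThan_Diff[OF P] card_lessThan_Diff[OF S(1)] S(2) by simp_all
  have sumJ: "\<Sum> ?J = (\<Sum>i<L - card P. set_nth ?J i)" and sumC: "\<Sum> ?C = (\<Sum>i<L - card P. set_nth ?C i)"
    using sum_set_nth[of ?J] sum_set_nth[of ?C] cJ cC by simp_all
  have "\<Sum> ?J + \<Sum> P = \<Sum> {..<L}" "\<Sum> ?C + \<Sum> S = \<Sum> {..<L}"
    using sum.subset_diff[OF P, of "\<lambda>x. x"] sum.subset_diff[OF S(1), of "\<lambda>x. x"] by simp_all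
  moreover assume "\<not> \<Sum> S < \<Sum> P"
  moreover have "\<Sum> ?J \<le> \<Sum> ?C" unfolding sumJ sumC by (rule sum_mono) (use le in simp)
  ultimately have eq: "(\<Sum>i<L - card P. set_nth ?J i) = (\<Sum>i<L - card P. set_nth ?C i)"
    unfolding sumJ sumC by linarith
  have "set_nth ?J i = set_nth ?C i" if i: "i < L - card P" for i
  proof (rule ccontr)
    assume "set_nth ?J i \<noteq> set_nth ?C i"
    then have "set_nth ?J i < set_nth ?C i" using le[OF i] by simp
    then have "(\<Sum>i<L - card P. set_nth ?J i) < (\<Sum>i<L - card P. set_nth ?C i)"
      using le i by (intro sum_strict_mono_ex1) (auto intro!: bexI[of _ i])
    with eq show False by simp
  qed
  then have "?J = ?C" using set_nth_eq_imp_eq[of ?J ?C] cJ cC by simp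
  then show False using P S(1,3) by blast
qed

lemma toeplitz_minor_laplace_complement:
  fixes e :: "int \<Rightarrow> 'a::comm_ring_1"
  assumes P: "P \<subseteq> {..<L}" "card P = a"
  shows "toeplitz_minor e L (\<lambda>i. if i < a then r i else c - int (set_nth ({..<L} - P) (i - a))) (\<lambda>t. c - int t)
    = (\<Sum>S\<in>{S. S \<subseteq> {..<L} \<and> card S = a}. of_int (sign (merge_perm L a S))
        * toeplitz_minor e a r (\<lambda>j. c - int (set_nth S j))
        * det_fun (L - a) (\<lambda>i j. e (int (set_nth ({..<L} - S) j) - int (set_nth ({..<L} - P) i))))"
proof -
  have "a \<le> L" using card_mono[OF _ P(1)] P(2) by simp
  then show ?thesis
    unfolding toeplitz_minor_def
    by (subst det_fun_laplace) (auto intro!: sum.cong arg_cong2[where f="(*)"] det_fun_cong)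
qed

text \<open>The exchange step: in the Laplace expansion along the first \<open>a\<close> rows of a straight minor
  whose remaining rows are the gaps of \<open>P\<close>, a complementary minor can only be non-zero if its
  column set dominates the gaps of \<open>P\<close>, which forces \<open>\<Sum> S < \<Sum> P\<close> unless \<open>S = P\<close>.\<close>

lemma toeplitz_minor_eq_0_by_exchange:
  fixes e :: "int \<Rightarrow> 'a::comm_ring_1"
  assumes e: "normalized e" and P: "P \<subseteq> {..<L}" "card P = a"
    and big: "toeplitz_minor e L (\<lambda>i. if i < a then r i else c - int (set_nth ({..<L} - P) (i - a)))
                (\<lambda>t. c - int t) = 0"
    and smaller: "\<And>S. S \<subseteq> {..<L} \<Longrightarrow> card S = a \<Longrightarrow> \<Sum> S < \<Sum> P \<Longrightarrow>
                    toeplitz_minor e a r (\<lambda>j. c - int (set_nth S j)) = 0"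
  shows "toeplitz_minor e a r (\<lambda>j. c - int (set_nth P j)) = 0"
proof -
  let ?Sub = "{S. S \<subseteq> {..<L} \<and> card S = a}"
  let ?co = "\<lambda>S. det_fun (L - a) (\<lambda>i j. e (int (set_nth ({..<L} - S) j) - int (set_nth ({..<L} - P) i)))"
  define F where "F S = of_int (sign (merge_perm L a S)) * toeplitz_minor e a r (\<lambda>j. c - int (set_nth S j)) * ?co S"
    for S
  have cJ: "card ({..<L} - P) = L - a" using card_lessThan_Diff[OF P(1)] P(2) by simp
  have F0: "F S = 0" if "S \<in> ?Sub - {P}" for S
  proof (cases "?co S = 0")
    case False
    have S: "S \<subseteq> {..<L}" "card S = a" "S \<noteq> P" using that by auto
    have cC: "card ({..<L} - S) = L - a" using card_lessThan_Diff[OF S(1)] S(2) by simp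
    have "\<Sum> S < \<Sum> P"
    proof (rule sum_less_if_complement_dominated[OF P(1) S(1) _ S(3)])
      show "card S = card P" using S(2) P(2) by simp
      fix i assume "i < L - card P"
      then show "set_nth ({..<L} - P) i \<le> set_nth ({..<L} - S) i"
        using set_nth_le_if_det_fun_ne_0[OF _ _ cJ _ cC False] e P(2) by (simp add: normalized_def)
    qed
    then show ?thesis using smaller S by (simp add: F_def)
  qed (simp add: F_def)
  have "0 = toeplitz_minor e L (\<lambda>i. if i < a then r i else c - int (set_nth ({..<L} - P) (i - a)))
      (\<lambda>t. c - int t)" using big by simp
  also have "\<dots> = (\<Sum>S\<in>?Sub. F S)" unfolding F_def by (rule toeplitz_minor_laplace_complement[OF P])
  also have "\<dots> = F P + (\<Sum>S\<in>?Sub - {P}. F S)"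
    by (rule sum.remove) (use P in \<open>auto intro: finite_subset[of _ "Pow {..<L}"]\<close>)
  also have "(\<Sum>S\<in>?Sub - {P}. F S) = 0" using F0 by simp
  also have "F P = of_int (sign (merge_perm L a P)) * toeplitz_minor e a r (\<lambda>j. c - int (set_nth P j))"
    using det_fun_set_nth_diff_self[OF e _ cJ] by (simp add: F_def)
  finally show ?thesis using sign_mult_eq_0D by (metis add_0_right)
qed

lemma strict_dec_eq_minus_set_nth:
  assumes k: "strict_dec a k"
  obtains P where "P \<subseteq> {..<nat (k 0 - k (a - 1)) + 1}" "card P = a"
    "\<And>j. j < a \<Longrightarrow> k j = k 0 - int (set_nth P j)"
proof -
  define pos where "pos j = nat (k 0 - k j)" for j
  have k0: "j < a \<Longrightarrow> k j \<le> k 0" for j using strict_dec_le[OF k, of 0 j] by simp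
  have pos_mono: "pos i < pos j" if "i < j" "j < a" for i j
    using k that k0[of i] k0[of j] unfolding strict_dec_def pos_def by force
  have "pos ` {..<a} \<subseteq> {..<nat (k 0 - k (a - 1)) + 1}"
  proof (rule image_subsetI)
    fix j assume "j \<in> {..<a}"
    then have "k (a - 1) \<le> k j" using strict_dec_le[OF k, of j "a - 1"] by simp
    then have "nat (k 0 - k j) \<le> nat (k 0 - k (a - 1))" by (intro nat_mono) simp
    then show "pos j \<in> {..<nat (k 0 - k (a - 1)) + 1}" by (simp add: pos_def)
  qed
  moreover have "inj_on pos {..<a}"
    by (rule inj_onI) (metis lessThan_iff nat_neq_iff pos_mono)
  then have "card (pos ` {..<a}) = a" by (simp add: card_image)
  moreover have "k j = k 0 - int (set_nth (pos ` {..<a}) j)" if "j < a" for j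
    using k0[OF that] set_nth_image_strict_mono[OF pos_mono that] by (simp add: pos_def)
  ultimately show thesis by (rule that)
qed

lemma strict_dec_rows_then_gaps:
  assumes r: "strict_dec a r" and c: "c < r (a - 1)" and J: "finite J"
  shows "strict_dec (a + card J) (\<lambda>i. (if i < a then r i else c - int (set_nth J (i - a))) - c)"
  unfolding strict_dec_def
proof (intro allI impI)
  fix i j assume ij: "i < j" "j < a + card J"
  consider "j < a" | "i < a" "a \<le> j" | "a \<le> i" by linarith
  then show "(if j < a then r j else c - int (set_nth J (j - a))) - c
      < (if i < a then r i else c - int (set_nth J (i - a))) - c"
  proof cases
    case 1
    then show ?thesis using r ij by (simp add: strict_dec_def)
  next
    case 2
    then have "r (a - 1) \<le> r i" using strict_dec_le[OF r, of i "a - 1"] by simp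
    then show ?thesis using 2 c by simp
  next
    case 3
    then show ?thesis using set_nth_strict_mono[OF J, of "i - a" "j - a"] ij by simp
  qed
qed

lemma toeplitz_minor_rows_then_gaps_eq_0:
  assumes S: "vanishes_straight a b e" and a: "1 \<le> a" "a \<le> b" and r: "strict_dec a r"
    and P: "P \<subseteq> {..<L}" "card P = a" and box: "int b \<le> r (a - 1) - c + int a - 1"
  shows "toeplitz_minor e L (\<lambda>i. if i < a then r i else c - int (set_nth ({..<L} - P) (i - a)))
           (\<lambda>t. c - int t) = 0"
proof -
  let ?row = "\<lambda>i. (if i < a then r i else c - int (set_nth ({..<L} - P) (i - a))) - c"
  have L: "L = a + card ({..<L} - P)" using card_lessThan_Diff[OF P(1)] P(2) card_mono[OF _ P(1)] by simp
  have "strict_dec (a + card ({..<L} - P)) ?row"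
    by (rule strict_dec_rows_then_gaps[OF r]) (use box a in simp_all)
  moreover have "int b \<le> ?row (a - 1) + int a - 1" using a box by simp
  ultimately have "toeplitz_minor e (a + card ({..<L} - P)) ?row (\<lambda>j. - int j) = 0"
    by (intro S[unfolded vanishes_straight_def, rule_format]) simp_all
  then show ?thesis using toeplitz_minor_shift[of e L _ c "\<lambda>t. c - int t"] L by simp
qed

lemma sum_minus_set_nth:
  assumes "finite S" "card S = a"
  shows "(\<Sum>j<a. K - (c - int (set_nth S j))) = int a * (K - c) + int (\<Sum> S)"
proof -
  have "(\<Sum>j<a. set_nth S j) = \<Sum> S" using sum_set_nth[OF assms(1)] assms(2) by simp
  then have sum_int: "(\<Sum>j<a. int (set_nth S j)) = int (\<Sum> S)" by (simp only: of_nat_sum[symmetric])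
  have "(\<Sum>j<a. K - (c - int (set_nth S j))) = (\<Sum>j<a. (K - c) + int (set_nth S j))"
    by (rule sum.cong) simp_all
  also have "\<dots> = int a * (K - c) + (\<Sum>j<a. int (set_nth S j))" by (simp add: sum.distrib)
  finally show ?thesis unfolding sum_int .
qed

lemma nat_sum_minus_set_nth_less:
  assumes S: "finite S" "card S = a" and P: "finite P" "card P = a" and "\<Sum> S < \<Sum> P" "c \<le> K"
  shows "nat (\<Sum>j<a. K - (c - int (set_nth S j))) < nat (\<Sum>j<a. K - (c - int (set_nth P j)))"
proof -
  have "int (\<Sum> S) < int (\<Sum> P)" using assms(5) by (simp only: of_nat_less_iff)
  moreover have "0 \<le> int a * (K - c)" using assms(6) by simp
  moreover have "0 \<le> int (\<Sum> S)" by (rule of_nat_0_le_iff)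
  ultimately show ?thesis
    unfolding sum_minus_set_nth[OF S] sum_minus_set_nth[OF P] zless_nat_conj by (intro conjI; linarith)
qed

lemma vanishes_straight_imp_square:
  fixes e :: "int \<Rightarrow> 'a::comm_ring_1"
  assumes S: "vanishes_straight a b e" and a: "1 \<le> a" "a \<le> b" and e: "normalized e"
  shows "vanishes_square a b e"
  unfolding vanishes_square_def
proof (intro allI impI)
  fix r k' assume r: "strict_dec a r" and "strict_dec a k'" and box: "int b \<le> r (a - 1) - k' 0 + int a - 1"
  define K where "K = k' 0"
  have "\<forall>k. strict_dec a k \<longrightarrow> k 0 \<le> K \<longrightarrow> nat (\<Sum>j<a. K - k j) = m \<longrightarrow> toeplitz_minor e a r k = 0" for m
  proof (induction m rule: less_induct)
    case (less m)
    show ?case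
    proof (intro allI impI)
      fix k assume k: "strict_dec a k" "k 0 \<le> K" and m: "nat (\<Sum>j<a. K - k j) = m"
      obtain P where P: "P \<subseteq> {..<nat (k 0 - k (a - 1)) + 1}" "card P = a"
        and kP: "\<And>j. j < a \<Longrightarrow> k j = k 0 - int (set_nth P j)"
        using strict_dec_eq_minus_set_nth[OF k(1)] by blast
      have fP: "finite P" using P(1) finite_subset by blast
      have m_P: "m = nat (\<Sum>j<a. K - (k 0 - int (set_nth P j)))"
        unfolding m[symmetric] by (rule arg_cong[where f=nat], rule sum.cong) (simp_all add: kP[symmetric])
      have "toeplitz_minor e a r (\<lambda>j. k 0 - int (set_nth P j)) = 0"
      proof (rule toeplitz_minor_eq_0_by_exchange[OF e P])
        show "toeplitz_minor e (nat (k 0 - k (a - 1)) + 1)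
            (\<lambda>i. if i < a then r i else k 0 - int (set_nth ({..<nat (k 0 - k (a - 1)) + 1} - P) (i - a)))
            (\<lambda>t. k 0 - int t) = 0"
          by (rule toeplitz_minor_rows_then_gaps_eq_0[OF S a r P]) (use box k(2) in \<open>simp add: K_def\<close>)
      next
        fix S assume S: "S \<subseteq> {..<nat (k 0 - k (a - 1)) + 1}" "card S = a" "\<Sum> S < \<Sum> P"
        have fS: "finite S" using S(1) finite_subset by blast
        have "strict_dec a (\<lambda>j. k 0 - int (set_nth S j))"
          using set_nth_strict_mono[OF fS] S(2) by (simp add: strict_dec_def)
        moreover have "k 0 - int (set_nth S 0) \<le> K" using k(2) by simp
        moreover have "nat (\<Sum>j<a. K - (k 0 - int (set_nth S j))) < m"
          unfolding m_P using nat_sum_minus_set_nth_less[OF fS S(2) fP P(2) S(3) k(2)] .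
        ultimately show "toeplitz_minor e a r (\<lambda>j. k 0 - int (set_nth S j)) = 0"
          by (intro less.IH[rule_format]) simp_all
      qed
      moreover have "toeplitz_minor e a r k = toeplitz_minor e a r (\<lambda>j. k 0 - int (set_nth P j))"
        unfolding toeplitz_minor_def by (rule det_fun_cong) (simp add: kP[symmetric])
      ultimately show "toeplitz_minor e a r k = 0" by simp
    qed
  qed
  then show "toeplitz_minor e a r k' = 0" using \<open>strict_dec a k'\<close> by (simp add: K_def)
qed

section \<open>Toeplitz matrices of sums\<close>

definition is_convolution :: "(int \<Rightarrow> 'a::comm_ring_1) \<Rightarrow> (int \<Rightarrow> 'a) \<Rightarrow> (int \<Rightarrow> 'a) \<Rightarrow> bool" where
  "is_convolution exy ex ey \<longleftrightarrow> (\<forall>m. exy m = (if m < 0 then 0 else (\<Sum>i\<le>nat m. ex (int i) * ey (m - int i))))"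

lemma normalized_mult_eq_0:
  assumes "normalized ex" "normalized ey" "\<not> (q \<le> s \<and> s \<le> p)"
  shows "ex (p - s) * ey (s - q) = 0"
  using assms by (auto simp: normalized_def not_le)

lemma convolution_window:
  assumes cv: "is_convolution exy ex ey" and gx: "normalized ex" and gy: "normalized ey"
    and pW: "p \<le> W" and qW: "W - int N < q"
  shows "exy (p - q) = (\<Sum>t<N. ex (p - (W - int t)) * ey ((W - int t) - q))"
proof (cases "p < q")
  case True
  then show ?thesis using cv normalized_mult_eq_0[OF gx gy] unfolding is_convolution_def by simp
next
  case False
  define D where "D = nat (W - p)"
  define m where "m = nat (p - q)"
  have Dm: "int D = W - p" "int m = p - q" using False pW unfolding D_def m_def by auto
  define f where "f t = ex (p - (W - int t)) * ey ((W - int t) - q)" for t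
  have "(\<Sum>t<N. f t) = (\<Sum>t\<in>{D..D+m}. f t)"
  proof (rule sum.mono_neutral_right)
    show "{D..D+m} \<subseteq> {..<N}" using Dm qW by auto
    show "\<forall>t\<in>{..<N} - {D..D+m}. f t = 0"
      using Dm unfolding f_def by (intro ballI normalized_mult_eq_0[OF gx gy]) auto
  qed auto
  also have "\<dots> = (\<Sum>i\<le>m. f (D + i))"
  proof -
    have "(+) D ` {0..m} = {D..D+m}" by (simp add: add.commute)
    then have "{D..D+m} = (+) D ` {..m}" by (simp add: atLeast0AtMost)
    then show ?thesis by (simp add: sum.reindex inj_on_def)
  qed
  also have "\<dots> = (\<Sum>i\<le>nat (p - q). ex (int i) * ey ((p - q) - int i))"
    unfolding m_def[symmetric] f_def by (rule sum.cong) (use Dm in \<open>auto simp: algebra_simps\<close>)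
  also have "\<dots> = exy (p - q)" using cv False unfolding is_convolution_def by simp
  finally show ?thesis unfolding f_def by simp
qed

text \<open>Splitting the box of \<open>a + c\<close> rows at an intermediate column set \<open>u\<close>: either the
  bottom \<open>a\<close> rows stay \<open>b\<close> ahead of \<open>u\<close>, or the top \<open>c\<close> rows of \<open>u\<close> are \<open>d\<close> ahead of \<open>k\<close>.\<close>

lemma vanishes_bottom_top_split:
  assumes Bx: "vanishes_bottom a b ex" and Ty: "vanishes_top c d ey" and a: "1 \<le> a" and c: "1 \<le> c"
    and r: "strict_dec (a + c) r" and u: "strict_dec (a + c) u" and k: "strict_dec (a + c) k"
    and box: "int (b + d) \<le> r (a + c - 1) - k 0 + int (a + c) - 1"
  shows "toeplitz_minor ex (a + c) r u = 0 \<or> toeplitz_minor ey (a + c) u k = 0"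
proof (cases "int b \<le> r (a + c - 1) - u c + int a - 1")
  case True
  then show ?thesis using Bx r u a unfolding vanishes_bottom_def by simp
next
  case False
  have "c - 1 < c" "c < a + c" using a c by auto
  then have "u c < u (c - 1)" using u unfolding strict_dec_def by blast
  then have "int d \<le> u (c - 1) - k 0 + int c - 1" using False box by simp
  then show ?thesis using Ty u k unfolding vanishes_top_def by simp
qed

lemma vanishes_square_convolution:
  assumes cv: "is_convolution exy ex ey" and gx: "normalized ex" and gy: "normalized ey"
    and Bx: "vanishes_bottom a b ex" and Ty: "vanishes_top c d ey" and a: "1 \<le> a" and c: "1 \<le> c"
  shows "vanishes_square (a + c) (b + d) exy"
  unfolding vanishes_square_def
proof (intro allI impI)
  let ?A = "a + c"
  fix r k assume r: "strict_dec ?A r" and k: "strict_dec ?A k"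
    and box: "int (b + d) \<le> r (?A - 1) - k 0 + int ?A - 1"
  define W where "W = max (r 0) (k 0)"
  define N where "N = nat (W - k (?A - 1)) + 1"
  have rW: "i < ?A \<Longrightarrow> r i \<le> W" for i using strict_dec_le[OF r, of 0 i] unfolding W_def by simp
  have "k (?A - 1) \<le> k 0" using strict_dec_le[OF k, of 0 "?A - 1"] a by simp
  then have kW: "k (?A - 1) \<le> W" unfolding W_def by simp
  have kN: "W - int N < k j" if "j < ?A" for j
  proof -
    have "k (?A - 1) \<le> k j" using strict_dec_le[OF k, of j "?A - 1"] that by simp
    then show ?thesis using kW unfolding N_def by simp
  qed
  have "toeplitz_minor exy ?A r k = det_fun ?A (\<lambda>i j. \<Sum>t<N. ex (r i - (W - int t)) * ey ((W - int t) - k j))"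
    unfolding toeplitz_minor_def by (rule det_fun_cong) (rule convolution_window[OF cv gx gy rW kN])
  also have "\<dots> = (\<Sum>S\<in>{S. S \<subseteq> {..<N} \<and> card S = ?A}.
      toeplitz_minor ex ?A r (\<lambda>j. W - int (set_nth S j)) * toeplitz_minor ey ?A (\<lambda>i. W - int (set_nth S i)) k)"
    unfolding toeplitz_minor_def by (rule det_fun_cauchy_binet)
  also have "\<dots> = 0"
  proof (rule sum.neutral, intro ballI)
    fix S assume "S \<in> {S. S \<subseteq> {..<N} \<and> card S = ?A}"
    then have S: "finite S" "card S = ?A" using finite_subset by auto
    have "strict_dec ?A (\<lambda>j. W - int (set_nth S j))"
      using set_nth_strict_mono[OF S(1)] S(2) by (simp add: strict_dec_def)
    from vanishes_bottom_top_split[OF Bx Ty a c r this k box] show "toeplitz_minor ex ?A r (\<lambda>j. W - int (set_nth S j))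
        * toeplitz_minor ey ?A (\<lambda>i. W - int (set_nth S i)) k = 0"
      by auto
  qed
  finally show "toeplitz_minor exy ?A r k = 0" .
qed

section \<open>Conjugate partitions\<close>

lemma less_length_filter_iff:
  fixes p :: "nat list"
  assumes "sorted_wrt (\<ge>) p" "i < length p"
  shows "i < length (filter (\<lambda>r. j < r) p) \<longleftrightarrow> j < p ! i"
  using assms
proof (induction p arbitrary: i)
  case Nil then show ?case by simp
next
  case (Cons x xs)
  have xs: "sorted_wrt (\<ge>) xs" and le: "\<forall>y\<in>set xs. y \<le> x" using Cons.prems(1) by auto
  show ?case
  proof (cases "j < x")
    case True
    show ?thesis
    proof (cases i)
      case 0 then show ?thesis using True by simp
    next
      case (Suc i')
      then have "i' < length xs" using Cons.prems(2) by simp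
      then show ?thesis using Cons.IH[OF xs] True Suc by simp
    qed
  next
    case False
    have "\<forall>y\<in>set xs. \<not> j < y"
    proof
      fix y assume "y \<in> set xs"
      then have "y \<le> x" using le by simp
      then show "\<not> j < y" using False by simp
    qed
    then have "filter (\<lambda>r. j < r) xs = []" by (simp add: filter_empty_conv)
    moreover have "(x # xs) ! i \<le> x"
    proof (cases i)
      case (Suc i')
      then have "i' < length xs" using Cons.prems(2) by simp
      then show ?thesis using le Suc by auto
    qed simp
    ultimately show ?thesis using False by simp
  qed
qed

lemma length_filter_less_upt: "length (filter (\<lambda>j. j < v) [0..<h]) = min h v"
proof -
  have "length (filter (\<lambda>j. j < v) [0..<h]) = card {i. i < h \<and> [0..<h] ! i < v}"
    by (simp add: length_filter_conv_card)
  also have "{i. i < h \<and> [0..<h] ! i < v} = {i. i < h \<and> i < v}" by auto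
  also have "{i. i < h \<and> i < v} = {..<min h v}" by auto
  finally show ?thesis by simp
qed

lemma length_filter_mono: "(\<And>x. P x \<Longrightarrow> Q x) \<Longrightarrow> length (filter P xs) \<le> length (filter Q xs)"
  by (induction xs) auto

lemma conj_part_is_partition: "is_partition (conj_part p)"
  unfolding is_partition_def
proof
  show "sorted_wrt (\<ge>) (conj_part p)"
    unfolding conj_part_def sorted_wrt_map
    by (rule sorted_wrt_mono_rel[OF _ sorted_wrt_upt]) (auto intro: length_filter_mono)
  show "0 \<notin> set (conj_part p)"
  proof
    assume "0 \<in> set (conj_part p)"
    then obtain j where j: "j < hd p" "p \<noteq> []" "length (filter (\<lambda>r. j < r) p) = 0"
      unfolding conj_part_def by (auto split: if_splits)
    have "hd p \<in> set p" using j(2) by simp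
    then show False using j by (auto simp: filter_empty_conv)
  qed
qed

lemma conj_part_conj_part:
  assumes "is_partition p"
  shows "conj_part (conj_part p) = p"
proof (cases "p = []")
  case True then show ?thesis by (simp add: conj_part_def)
next
  case False
  have sp: "sorted_wrt (\<ge>) p" and nz: "0 \<notin> set p" using assms unfolding is_partition_def by auto
  let ?c = "conj_part p"
  have c: "?c = map (\<lambda>j. length (filter (\<lambda>r. j < r) p)) [0..<hd p]"
    using False by (simp add: conj_part_def)
  have hp: "0 < hd p" using nz False by (metis hd_in_set neq0_conv)
  have cne: "?c \<noteq> []" using c hp by simp
  have hdc: "hd ?c = length p"
  proof -
    have "hd ?c = length (filter (\<lambda>r. 0 < r) p)" using c hp by (simp add: hd_map upt_conv_Cons)
    also have "filter (\<lambda>r. 0 < r) p = p"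
    proof (rule filter_True, rule ballI)
      fix x assume x: "x \<in> set p"
      show "0 < x" using nz x by (cases x) auto
    qed
    finally show ?thesis .
  qed
  have lc: "length ?c = hd p" using c by simp
  show ?thesis
  proof (rule nth_equalityI)
    show "length (conj_part ?c) = length p" using cne hdc by (simp add: conj_part_def)
    fix i assume "i < length (conj_part ?c)"
    then have i: "i < length p" using cne hdc by (simp add: conj_part_def)
    have "conj_part ?c ! i = length (filter (\<lambda>r. i < r) ?c)"
      using cne hdc i by (simp add: conj_part_def)
    also have "filter (\<lambda>r. i < r) ?c = map (\<lambda>j. length (filter (\<lambda>r. j < r) p)) (filter (\<lambda>j. j < p ! i) [0..<hd p])"
      unfolding c filter_map o_def using less_length_filter_iff[OF sp i] by (intro arg_cong[where f="map _"] filter_cong) auto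
    also have "length \<dots> = min (hd p) (p ! i)" by (simp add: length_filter_less_upt)
    also have "\<dots> = p ! i"
    proof -
      have "p ! i \<le> p ! 0" using sp i by (cases i) (auto simp: sorted_wrt_iff_nth_less)
      then show ?thesis using False by (simp add: hd_conv_nth)
    qed
    finally show "conj_part ?c ! i = p ! i" .
  qed
qed

lemma length_conj_part: "p \<noteq> [] \<Longrightarrow> length (conj_part p) = hd p"
  by (simp add: conj_part_def)

lemma nth_conj_part: "p \<noteq> [] \<Longrightarrow> j < hd p \<Longrightarrow> conj_part p ! j = length (filter (\<lambda>r. j < r) p)"
  by (simp add: conj_part_def)

lemma part_contains_conj_part:
  assumes p: "sorted_wrt (\<ge>) p" and i0: "i0 < length p"
    and la: "length la \<le> p ! i0" "\<forall>x\<in>set la. x \<le> Suc i0"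
  shows "part_contains (conj_part p) la"
  unfolding part_contains_def
proof
  have ne: "p \<noteq> []" using i0 by auto
  have hd: "p ! i0 \<le> hd p" using p i0 ne by (cases i0) (auto simp: hd_conv_nth sorted_wrt_iff_nth_less)
  then show "length la \<le> length (conj_part p)" using la(1) ne by (simp add: length_conj_part)
  show "\<forall>i<length la. la ! i \<le> conj_part p ! i"
  proof (intro allI impI)
    fix i assume i: "i < length la"
    then have "i < p ! i0" using la(1) by simp
    then have "i0 < length (filter (\<lambda>r. i < r) p)" using less_length_filter_iff[OF p i0] by simp
    moreover have "la ! i \<le> Suc i0" using la(2) i by simp
    ultimately show "la ! i \<le> conj_part p ! i" using \<open>i < p ! i0\<close> hd ne by (simp add: nth_conj_part)
  qed
qed

lemma conj_part_nth_ge_if_contains_rectangle: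
  assumes q: "is_partition q" "part_contains q (replicate B A)" and A: "1 \<le> A" and B: "1 \<le> B"
  shows "A \<le> length (conj_part q)" "B \<le> conj_part q ! (A - 1)"
proof -
  have sq: "sorted_wrt (\<ge>) q" and Bq: "B \<le> length q" and Aq: "\<And>i. i < B \<Longrightarrow> A \<le> q ! i"
    using q unfolding is_partition_def part_contains_def by auto
  have ne: "q \<noteq> []" using Bq B by auto
  have hq: "A \<le> hd q" using Aq[of 0] B ne by (simp add: hd_conv_nth)
  then show "A \<le> length (conj_part q)" using ne by (simp add: length_conj_part)
  have "B - 1 < length (filter (\<lambda>r. A - 1 < r) q)"
    using less_length_filter_iff[OF sq, of "B - 1" "A - 1"] Bq B Aq[of "B - 1"] A by simp
  then show "B \<le> conj_part q ! (A - 1)" using nth_conj_part[OF ne, of "A - 1"] hq A by simp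
qed

section \<open>Schur-finiteness as vanishing of straight minors\<close>

lemma schur_eq_toeplitz_minor:
  "schur lam q z = toeplitz_minor (\<lambda>m. lam_int lam m z) (length (conj_part q))
      (\<lambda>i. int (conj_part q ! i) - int i) (\<lambda>j. - int j)"
proof -
  have "schur lam q z = det (mat (length (conj_part q)) (length (conj_part q))
      (\<lambda>(i,j). (\<lambda>i j. lam_int lam ((int (conj_part q ! i) - int i) - (- int j)) z) i j))"
    unfolding schur_def Let_def by (simp add: algebra_simps)
  also have "\<dots> = toeplitz_minor (\<lambda>m. lam_int lam m z) (length (conj_part q))
      (\<lambda>i. int (conj_part q ! i) - int i) (\<lambda>j. - int j)"
    unfolding det_mat_eq_det_fun toeplitz_minor_def ..
  finally show ?thesis .
qed

lemma normalized_lam_int: "lambda_ring lam \<Longrightarrow> normalized (\<lambda>m. lam_int lam m z)"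
  unfolding normalized_def lambda_ring_def lam_int_def by simp

lemma convolution_lam_int_add:
  assumes "lambda_ring lam"
  shows "is_convolution (\<lambda>m. lam_int lam m (x + y)) (\<lambda>m. lam_int lam m x) (\<lambda>m. lam_int lam m y)"
  unfolding is_convolution_def
proof
  fix m :: int
  have add: "lam n (x + y) = (\<Sum>i\<le>n. lam i x * lam (n - i) y)" for n
    using assms unfolding lambda_ring_def by blast
  show "lam_int lam m (x + y) = (if m < 0 then 0 else
      \<Sum>i\<le>nat m. lam_int lam (int i) x * lam_int lam (m - int i) y)"
  proof (cases "m < 0")
    case True then show ?thesis by (simp add: lam_int_def)
  next
    case False
    have "lam_int lam m (x + y) = (\<Sum>i\<le>nat m. lam i x * lam (nat m - i) y)"
      using False add by (simp add: lam_int_def)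
    also have "\<dots> = (\<Sum>i\<le>nat m. lam_int lam (int i) x * lam_int lam (m - int i) y)"
    proof (rule sum.cong[OF refl])
      fix i assume "i \<in> {..nat m}"
      then have "\<not> m - int i < 0" "nat (m - int i) = nat m - i" using False by auto
      then show "lam i x * lam (nat m - i) y = lam_int lam (int i) x * lam_int lam (m - int i) y"
        by (simp add: lam_int_def)
    qed
    finally show ?thesis using False by simp
  qed
qed

lemma strict_dec_conj_part: "strict_dec (length (conj_part q)) (\<lambda>i. int (conj_part q ! i) - int i)"
  unfolding strict_dec_def
proof (intro allI impI)
  fix i j assume ij: "i < j" "j < length (conj_part q)"
  have "sorted_wrt (\<ge>) (conj_part q)" using conj_part_is_partition by (simp add: is_partition_def)
  then have "conj_part q ! j \<le> conj_part q ! i" using ij by (simp add: sorted_wrt_iff_nth_less)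
  with ij(1) show "int (conj_part q ! j) - int j < int (conj_part q ! i) - int i" by simp
qed

lemma vanishes_straight_imp_schur_finite:
  assumes A: "1 \<le> A" and B: "1 \<le> B" and St: "vanishes_straight A B (\<lambda>m. lam_int lam m w)"
  shows "schur_finite lam w"
  unfolding schur_finite_def
proof (intro exI conjI allI impI)
  show "is_partition (replicate B A)" using A unfolding is_partition_def
    by (auto simp: sorted_wrt_iff_nth_less)
  fix q assume "is_partition q \<and> part_contains q (replicate B A)"
  then have "A \<le> length (conj_part q)" "B \<le> conj_part q ! (A - 1)"
    using conj_part_nth_ge_if_contains_rectangle[OF _ _ A B] by auto
  then have "toeplitz_minor (\<lambda>m. lam_int lam m w) (length (conj_part q))
      (\<lambda>i. int (conj_part q ! i) - int i) (\<lambda>j. - int j) = 0"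
    using St strict_dec_conj_part A unfolding vanishes_straight_def by simp
  then show "schur lam q w = 0" unfolding schur_eq_toeplitz_minor .
qed

lemma toeplitz_minor_straight_eq_0_if_last_neg:
  assumes e: "\<And>m. m < 0 \<Longrightarrow> e m = 0" and neg: "r n + int n < 0"
  shows "toeplitz_minor e (Suc n) r (\<lambda>j. - int j) = 0"
  unfolding toeplitz_minor_def
proof (rule det_fun_zero_block[of n])
  fix i j assume "n \<le> i" "i < Suc n" "j \<le> n"
  then have "i = n" by simp
  then have "r i - - int j < 0" using neg \<open>j \<le> n\<close> by simp
  then show "e (r i - - int j) = 0" by (intro e)
qed simp

lemma toeplitz_minor_straight_drop_last:
  assumes e: "normalized e" and zero: "r n + int n = 0"
  shows "toeplitz_minor e (Suc n) r (\<lambda>j. - int j) = toeplitz_minor e n r (\<lambda>j. - int j)"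
  unfolding toeplitz_minor_def
  by (rule det_fun_drop_last) (use e zero in \<open>auto simp: normalized_def\<close>)

lemma toeplitz_minor_straight_eq_schur:
  fixes r :: "nat \<Rightarrow> int"
  assumes r: "strict_dec n r" and pos: "0 < r (n - 1) + int (n - 1)"
  defines "c \<equiv> map (\<lambda>i. nat (r i + int i)) [0..<n]"
  shows "is_partition c"
    and "toeplitz_minor (\<lambda>m. lam_int lam m z) n r (\<lambda>j. - int j) = schur lam (conj_part c) z"
proof -
  have c_pos: "0 < r i + int i" if "i < n" for i
  proof -
    have "i \<le> n - 1" "n - 1 < n" using that by auto
    then have "r (n - 1) + int (n - 1) \<le> r i + int i" by (rule strict_dec_add_index[OF r])
    then show ?thesis using pos by simp
  qed
  have c_nth: "i < n \<Longrightarrow> c ! i = nat (r i + int i)" for i unfolding c_def by simp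
  have lc: "length c = n" unfolding c_def by simp
  show c: "is_partition c" unfolding is_partition_def
  proof
    show "sorted_wrt (\<ge>) c" unfolding sorted_wrt_iff_nth_less c_def
      using strict_dec_add_index[OF r] by (auto intro: nat_mono)
    have "\<forall>x\<in>set c. 0 < x" using c_pos unfolding c_def by (auto simp del: upt_Suc)
    then show "0 \<notin> set c" by auto
  qed
  have "toeplitz_minor (\<lambda>m. lam_int lam m z) n r (\<lambda>j. - int j) =
      toeplitz_minor (\<lambda>m. lam_int lam m z) (length c) (\<lambda>i. int (c ! i) - int i) (\<lambda>j. - int j)"
    unfolding toeplitz_minor_def lc by (rule det_fun_cong) (simp add: c_nth less_imp_le[OF c_pos])
  then show "toeplitz_minor (\<lambda>m. lam_int lam m z) n r (\<lambda>j. - int j) = schur lam (conj_part c) z"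
    unfolding schur_eq_toeplitz_minor conj_part_conj_part[OF c] .
qed

lemma schur_finite_imp_vanishes_straight:
  assumes lr: "lambda_ring lam" and sf: "schur_finite lam z"
  obtains a b where "1 \<le> a" "1 \<le> b" "vanishes_straight a b (\<lambda>m. lam_int lam m z)"
proof -
  obtain la where la: "is_partition la"
    and van: "\<And>q. is_partition q \<Longrightarrow> part_contains q la \<Longrightarrow> schur lam q z = 0"
    using sf unfolding schur_finite_def by blast
  let ?e = "\<lambda>m. lam_int lam m z" and ?a = "Suc (sum_list la)" and ?b = "Suc (length la)"
  have e: "normalized ?e" by (rule normalized_lam_int[OF lr])
  have "strict_dec n r \<longrightarrow> ?a \<le> n \<longrightarrow> int ?b \<le> r (?a - 1) + int ?a - 1 \<longrightarrow>
      toeplitz_minor ?e n r (\<lambda>j. - int j) = 0" for n r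
  proof (induction n)
    case (Suc m)
    show ?case
    proof (intro impI)
      assume r: "strict_dec (Suc m) r" and am: "?a \<le> Suc m" and box: "int ?b \<le> r (?a - 1) + int ?a - 1"
      consider "r m + int m < 0" | "r m + int m = 0" | "0 < r m + int m" by linarith
      then show "toeplitz_minor ?e (Suc m) r (\<lambda>j. - int j) = 0"
      proof cases
        case 1
        then show ?thesis using e by (intro toeplitz_minor_straight_eq_0_if_last_neg) (auto simp: normalized_def)
      next
        case 2
        have "?a \<noteq> Suc m" using box 2 by auto
        moreover have "toeplitz_minor ?e (Suc m) r (\<lambda>j. - int j) = toeplitz_minor ?e m r (\<lambda>j. - int j)"
          by (rule toeplitz_minor_straight_drop_last[OF e]) (rule 2)
        ultimately show ?thesis using Suc.IH strict_dec_mono[OF r] am box by simp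
      next
        case 3
        define c where "c = map (\<lambda>i. nat (r i + int i)) [0..<Suc m]"
        have c: "is_partition c" "toeplitz_minor ?e (Suc m) r (\<lambda>j. - int j) = schur lam (conj_part c) z"
          using toeplitz_minor_straight_eq_schur(1)[OF r] toeplitz_minor_straight_eq_schur(2)[OF r, of lam z] 3
          unfolding c_def by simp_all
        have "sum_list la < Suc m" using am by simp
        moreover have "int (length la) < r (sum_list la) + int (sum_list la)" using box by simp
        ultimately have "length la \<le> c ! sum_list la" unfolding c_def by (simp del: upt_Suc)
        moreover have "\<forall>x\<in>set la. x \<le> Suc (sum_list la)" by (simp add: member_le_sum_list le_SucI)
        ultimately have "part_contains (conj_part c) la"
          using c(1) \<open>sum_list la < Suc m\<close> unfolding c_def
          by (intro part_contains_conj_part) (auto simp: is_partition_def simp del: upt_Suc)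
        then show ?thesis using van conj_part_is_partition c(2) by simp
      qed
    qed
  qed simp
  then show thesis by (intro that[of ?a ?b]) (auto simp: vanishes_straight_def)
qed

theorem lemma4:
  fixes lam :: "nat \<Rightarrow> 'a::comm_ring_1 \<Rightarrow> 'a" and x y :: 'a
  assumes "lambda_ring lam"
    and "schur_finite lam x"
    and "schur_finite lam y"
  shows "schur_finite lam (x + y)"
proof -
  have e: "normalized (\<lambda>m. lam_int lam m z)" for z by (rule normalized_lam_int[OF assms(1)])
  obtain a b where a: "1 \<le> a" "1 \<le> b" and Sx: "vanishes_straight a b (\<lambda>m. lam_int lam m x)"
    using schur_finite_imp_vanishes_straight[OF assms(1,2)] by blast
  obtain c d where c: "1 \<le> c" "1 \<le> d" and Sy: "vanishes_straight c d (\<lambda>m. lam_int lam m y)"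
    using schur_finite_imp_vanishes_straight[OF assms(1,3)] by blast
  have "vanishes_square a (max a b) (\<lambda>m. lam_int lam m x)"
    by (rule vanishes_straight_imp_square[OF vanishes_straight_mono[OF Sx] a(1) _ e]) auto
  then have Bx: "vanishes_bottom a (max a b) (\<lambda>m. lam_int lam m x)"
    by (rule vanishes_top_imp_bottom[OF vanishes_square_imp_top[OF _ a(1)] a(1)])
  have "vanishes_square c (max c d) (\<lambda>m. lam_int lam m y)"
    by (rule vanishes_straight_imp_square[OF vanishes_straight_mono[OF Sy] c(1) _ e]) auto
  then have Ty: "vanishes_top c (max c d) (\<lambda>m. lam_int lam m y)"
    by (rule vanishes_square_imp_top[OF _ c(1)])
  have "vanishes_square (a + c) (max a b + max c d) (\<lambda>m. lam_int lam m (x + y))"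
    by (rule vanishes_square_convolution[OF convolution_lam_int_add[OF assms(1)] e e Bx Ty a(1) c(1)])
  then have "vanishes_straight (a + c) (max a b + max c d) (\<lambda>m. lam_int lam m (x + y))"
    by (rule vanishes_top_imp_straight[OF vanishes_square_imp_top]) (use a in simp)
  then show ?thesis by (rule vanishes_straight_imp_schur_finite[rotated 2]) (use a c in auto)
qed

end
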